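(* Let $\gamma>0$ and $f_I=\chi_{[0,1/(1+\gamma)]}$ (value $1$ on $[0,\frac1{1+\gamma}]$, $0$ elsewhere), so that $u_I(\xi)=(\gamma\xi)^{1/\gamma}\chi_{[0,1/\gamma]}(\xi)$. Then the entropy solution $u$ of the split Cauchy problem with datum $u_I$ vanishes for $\xi<0$ and for $\xi>0$ is $$u(\xi,t)=\begin{cases}\left(\frac{\gamma\xi}{1-\gamma t}\right)^{1/\gamma}, & 0\le\xi\le\frac1\gamma-t,\ 0\le t<\frac1\gamma,\\[1mm] \left(\frac{1-\gamma\xi}{\gamma t}\right)^{1/\gamma}, & \max\{0,\frac1\gamma-t\}\le\xi\le\frac1\gamma,\\[1mm] 0&\text{otherwise.}\end{cases}$$ Consequently $\rho(x,t)=\xi'(x)u(\xi(x),t)$ is given, for $x>0$, by $$\rho(x,t)=\begin{cases}(1-\gamma t)^{-1/\gamma}, & 0< x\le \frac{(1-\gamma t)^{(1+\gamma)/\gamma}}{1+\gamma},\ 0\le t<\frac1\gamma,\\[1mm] \left[\frac{((1+\gamma)x)^{-\gamma/(1+\gamma)}-1}{\gamma t}\right]^{1/\gamma}, & \max\Bigl\{0,\frac{(1-\gamma t)_+^{(1+\gamma)/\gamma}}{1+\gamma}\Bigr\}\le x\le\frac1{1+\gamma},\\[1mm] 0&\text{otherwise,}\end{cases}$$ and $\rho(x,t)=0$ for $x<0$. In particular $\int_0^\infty\rho(x,t)\,dx=\frac1{1+\gamma}$ for $0\le t\le\frac1\gamma$, while $\int_0^\infty\rho(x,t)\,dx=\frac{1}{1+\gamma}(\gamma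 t)^{-1/\gamma}$ for $t\ge\frac1\gamma$.
   Context: Here $\xi(x)=\operatorname{sign}(x)\frac1\gamma((1+\gamma)|x|)^{\gamma/(1+\gamma)}$ and $u_I(\xi)=(\gamma|\xi|)^{1/\gamma}f_I\bigl(\operatorname{sign}(\xi)\frac{1}{1+\gamma}(\gamma|\xi|)^{(1+\gamma)/\gamma}\bigr)$. An entropy solution of the split Cauchy problem with datum $u_I$ means: $u\in L^\infty([0,\infty);L^1\cap BV(\mathbb{R}))$, $u|_{\xi>0}$ a weak solution of $u_t-(\frac{1}{1+\gamma}u^{1+\gamma})_\xi=0$ on $\xi>0$ with datum $u_I|_{\xi>0}$ (no boundary condition at $\xi=0$), $u|_{\xi<0}$ a weak solution of $u_t+(\frac{1}{1+\gamma}u^{1+\gamma})_\xi=0$ on $\xi<0$ with datum $u_I|_{\xi<0}$, and for every $t$: $u(\xi_0^-,t)\ge u(\xi_0^+,t)$ if $\xi_0<0$, $u(\xi_0^-,t)\le u(\xi_0^+,t)$ if $\xi_0>0$ (such a solution is unique). *)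

theory Defs
  imports "HOL-Analysis.Analysis"
begin

definition xi_map :: "real \<Rightarrow> real \<Rightarrow> real" where
  "xi_map \<gamma> x = sgn x * (1 / \<gamma>) * (((1 + \<gamma>) * \<bar>x\<bar>) powr (\<gamma> / (1 + \<gamma>)))"

definition uI_of :: "real \<Rightarrow> (real \<Rightarrow> real) \<Rightarrow> real \<Rightarrow> real" where
  "uI_of \<gamma> fI \<xi> = ((\<gamma> * \<bar>\<xi>\<bar>) powr (1 / \<gamma>)) *
      fI (sgn \<xi> * (1 / (1 + \<gamma>)) * ((\<gamma> * \<bar>\<xi>\<bar>) powr ((1 + \<gamma>) / \<gamma>)))"

text \<open>Flux u^(1+gamma)/(1+gamma) (only evaluated on nonnegative u in this setting).\<close>

definition flux :: "real \<Rightarrow> real \<Rightarrow> real" where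
  "flux \<gamma> v = \<bar>v\<bar> powr (1 + \<gamma>) / (1 + \<gamma>)"

definition variation_sum :: "(real \<Rightarrow> real) \<Rightarrow> real list \<Rightarrow> real" where
  "variation_sum f xs = (\<Sum>i<length xs - 1. \<bar>f (xs ! Suc i) - f (xs ! i)\<bar>)"

text \<open>u \<in> L^\<infinity>([0,\<infinity>); L^1 \<inter> BV(R)): u is jointly Borel measurable and, uniformly in t \<ge> 0,
  u(.,t) is integrable and of bounded variation.\<close>

definition Linf_L1_BV :: "(real \<Rightarrow> real \<Rightarrow> real) \<Rightarrow> bool" where
  "Linf_L1_BV u \<longleftrightarrow>
     (\<lambda>p. u (fst p) (snd p)) \<in> borel_measurable borel \<and>
     (\<exists>M. \<forall>t\<ge>0. integrable lborel (\<lambda>\<xi>. u \<xi> t) \<and>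
                 (\<integral>\<xi>. \<bar>u \<xi> t\<bar> \<partial>lborel) \<le> M \<and>
                 (\<forall>xs. sorted xs \<longrightarrow> variation_sum (\<lambda>\<xi>. u \<xi> t) xs \<le> M))"

text \<open>C^1 test functions with compact support contained in S (as subset of R x R, with
  coordinates (xi, t)); phx, pht are the (continuous) partial derivatives.\<close>

definition test_fun :: "(real \<times> real) set \<Rightarrow> (real \<times> real \<Rightarrow> real) \<Rightarrow>
    (real \<times> real \<Rightarrow> real) \<Rightarrow> (real \<times> real \<Rightarrow> real) \<Rightarrow> bool" where
  "test_fun S \<phi> phx pht \<longleftrightarrow>
     (\<forall>\<xi> t. ((\<lambda>s. \<phi> (s, t)) has_real_derivative phx (\<xi>, t)) (at \<xi>)) \<and>
     (\<forall>\<xi> t. ((\<lambda>s. \<phi> (\<xi>, s)) has_real_derivative pht (\<xi>, t)) (at t)) \<and>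
     continuous_on UNIV phx \<and> continuous_on UNIV pht \<and>
     compact (closure {p. \<phi> p \<noteq> 0}) \<and> closure {p. \<phi> p \<noteq> 0} \<subseteq> S"

text \<open>Weak solution on xi > 0 of u_t - (flux u)_xi = 0 with datum uI (no boundary condition
  at xi = 0: test functions are supported in xi > 0).\<close>

definition weak_sol_pos :: "real \<Rightarrow> (real \<Rightarrow> real) \<Rightarrow> (real \<Rightarrow> real \<Rightarrow> real) \<Rightarrow> bool" where
  "weak_sol_pos \<gamma> uI u \<longleftrightarrow>
     (\<forall>\<phi> phx pht. test_fun {p. fst p > 0} \<phi> phx pht \<longrightarrow>
        (LINT p : {p. fst p > 0 \<and> snd p \<ge> 0} | lborel.
            u (fst p) (snd p) * pht p - flux \<gamma> (u (fst p) (snd p)) * phx p)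
        + (LINT \<xi> : {0<..} | lborel. uI \<xi> * \<phi> (\<xi>, 0)) = 0)"

text \<open>Weak solution on xi < 0 of u_t + (flux u)_xi = 0 with datum uI.\<close>

definition weak_sol_neg :: "real \<Rightarrow> (real \<Rightarrow> real) \<Rightarrow> (real \<Rightarrow> real \<Rightarrow> real) \<Rightarrow> bool" where
  "weak_sol_neg \<gamma> uI u \<longleftrightarrow>
     (\<forall>\<phi> phx pht. test_fun {p. fst p < 0} \<phi> phx pht \<longrightarrow>
        (LINT p : {p. fst p < 0 \<and> snd p \<ge> 0} | lborel.
            u (fst p) (snd p) * pht p + flux \<gamma> (u (fst p) (snd p)) * phx p)
        + (LINT \<xi> : {..<0} | lborel. uI \<xi> * \<phi> (\<xi>, 0)) = 0)"

definition entropy_solution :: "real \<Rightarrow> (real \<Rightarrow> real) \<Rightarrow> (real \<Rightarrow> real \<Rightarrow> real) \<Rightarrow> bool" where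
  "entropy_solution \<gamma> uI u \<longleftrightarrow>
     Linf_L1_BV u \<and> weak_sol_pos \<gamma> uI u \<and> weak_sol_neg \<gamma> uI u \<and>
     (\<forall>t>0. \<forall>\<xi>0.
        (\<xi>0 < 0 \<longrightarrow> Lim (at_left \<xi>0) (\<lambda>\<xi>. u \<xi> t) \<ge> Lim (at_right \<xi>0) (\<lambda>\<xi>. u \<xi> t)) \<and>
        (\<xi>0 > 0 \<longrightarrow> Lim (at_left \<xi>0) (\<lambda>\<xi>. u \<xi> t) \<le> Lim (at_right \<xi>0) (\<lambda>\<xi>. u \<xi> t)))"

definition u_expl :: "real \<Rightarrow> real \<Rightarrow> real \<Rightarrow> real" where
  "u_expl \<gamma> \<xi> t =
     (if 0 \<le> \<xi> \<and> \<xi> \<le> 1/\<gamma> - t \<and> 0 \<le> t \<and> t < 1/\<gamma> then (\<gamma> * \<xi> / (1 - \<gamma> * t)) powr (1/\<gamma>)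
      else if max 0 (1/\<gamma> - t) \<le> \<xi> \<and> \<xi> \<le> 1/\<gamma> then ((1 - \<gamma> * \<xi>) / (\<gamma> * t)) powr (1/\<gamma>)
      else 0)"

definition rho_expl :: "real \<Rightarrow> real \<Rightarrow> real \<Rightarrow> real" where
  "rho_expl \<gamma> x t =
     (if 0 < x \<and> x \<le> (1 - \<gamma> * t) powr ((1 + \<gamma>) / \<gamma>) / (1 + \<gamma>) \<and> 0 \<le> t \<and> t < 1/\<gamma>
        then (1 - \<gamma> * t) powr (- 1/\<gamma>)
      else if max 0 ((max (1 - \<gamma> * t) 0) powr ((1 + \<gamma>) / \<gamma>) / (1 + \<gamma>)) \<le> x \<and> x \<le> 1 / (1 + \<gamma>)
        then ((((1 + \<gamma>) * x) powr (- \<gamma> / (1 + \<gamma>)) - 1) / (\<gamma> * t)) powr (1/\<gamma>)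
      else 0)"

end

theory Submission
  imports Defs
begin

(* Throughout, g > 0 plays the role of gamma, and u = u_expl g.

   For xi > 0, u has three regions: an inner region 0 <= xi <= 1/g - t, where the initial
   profile is compressed towards the outflow boundary xi = 0, u = (g xi / (1 - g t))^(1/g);
   a rarefaction fan max 0 (1/g - t) <= xi <= 1/g issuing from the jump of the datum at
   xi = 1/g, u = ((1 - g xi)/(g t))^(1/g); and zero elsewhere.  So u is bounded by 1,
   continuous in xi for t > 0, and increasing then decreasing in xi, which gives the
   L^inf(L^1 n BV) bound and the entropy inequalities (both one-sided limits agree).

   The weak formulation on xi > 0 rests on one auxiliary function v = u_dt, which is both
   the t-derivative of u and the xi-derivative of flux(u) off the lines xi = 1/g - t and
   xi = 1/g.  Hence the weak integrand u phi_t - flux(u) phi_xi equals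
   (u phi)_t - (flux(u) phi)_xi.  For each t > 0 the second term integrates to 0 in xi;
   for each xi the first integrates to - u(xi,0) phi(xi,0) in t; Fubini exchanges the two
   orders, the needed integrability coming from |v| <= 1/(g t) on the fan, whose width
   is t.  On xi < 0 everything vanishes.

   Finally rho(x,t) = xi'(x) u(xi(x),t) is computed by rewriting the regions of rho_expl
   in terms of xi = xi(x), and its mass follows from an explicit primitive of the fan part. *)

lemma powr_le_powr_iff:
  fixes x y a :: real
  assumes "a > 0" "0 \<le> x" "0 \<le> y"
  shows "x powr a \<le> y powr a \<longleftrightarrow> x \<le> y"
  using assms powr_mono2[of a x y] powr_less_mono2[of a y x] by (auto simp: not_le[symmetric])

(* One-sided limits of a function continuous at x are its value; this reduces the
   entropy inequalities to continuity. *)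
lemma Lim_at_left_isCont: "isCont f x \<Longrightarrow> Lim (at_left x) f = f (x::real)"
  by (rule tendsto_Lim) (auto simp: isCont_def intro: tendsto_mono[OF at_le])

lemma Lim_at_right_isCont: "isCont f x \<Longrightarrow> Lim (at_right x) f = f (x::real)"
  by (rule tendsto_Lim) (auto simp: isCont_def intro: tendsto_mono[OF at_le])

lemma has_integral_Ioi_if_vanishes_beyond:
  fixes f :: "real \<Rightarrow> real"
  assumes "(f has_integral I) {0..b}" and "\<And>x. x > b \<Longrightarrow> f x = 0"
  shows "(f has_integral I) {0<..}"
proof -
  have A: "((\<lambda>x. if x \<in> {0..b} then f x else 0) has_integral I) UNIV"
    using assms(1) has_integral_restrict_UNIV by blast
  have "((\<lambda>x. if x \<in> {0<..} then f x else 0) has_integral I) UNIV"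
    by (rule has_integral_spike_finite[of "{0}", OF _ _ A]) (use assms(2) in \<open>auto simp: not_le\<close>)
  then show ?thesis using has_integral_restrict_UNIV by blast
qed

lemma integrable_if_bounded_on_Icc:
  fixes f :: "real \<Rightarrow> real"
  assumes m: "f \<in> borel_measurable borel" and vanish: "\<And>x. x \<notin> {\<alpha>..\<beta>} \<Longrightarrow> f x = 0"
    and B: "\<And>x. x \<in> {\<alpha>..\<beta>} \<Longrightarrow> \<bar>f x\<bar> \<le> B"
  shows "integrable lborel f"
proof (rule Bochner_Integration.integrable_bound[of _ "\<lambda>x. B * indicator {\<alpha>..\<beta>} x :: real"])
  show "integrable lborel (\<lambda>x. B * indicator {\<alpha>..\<beta>} x :: real)"
    by (intro integrable_mult_right) (auto intro!: integrable_real_indicator simp: emeasure_lborel_Icc_eq)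
  show "f \<in> borel_measurable lborel" using m by simp
  show "AE x in lborel. norm (f x) \<le> norm (B * indicator {\<alpha>..\<beta>} x :: real)"
    using B vanish by (intro AE_I2) (auto simp: indicator_def intro: order_trans[OF _ abs_ge_self])
qed

(* For a bounded Borel function on a compact interval, the Lebesgue integral agrees with
   the gauge integral; this is how the fundamental theorem of calculus enters the
   Lebesgue integrals of the weak formulation. *)
lemma lebesgue_integral_Icc_eq_has_integral:
  fixes f :: "real \<Rightarrow> real"
  assumes I: "(f has_integral I) {\<alpha>..\<beta>}" and m: "f \<in> borel_measurable borel"
    and B: "\<And>x. x \<in> {\<alpha>..\<beta>} \<Longrightarrow> \<bar>f x\<bar> \<le> B"
  shows "(\<integral>x. indicator {\<alpha>..\<beta>} x * f x \<partial>lborel) = I"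
proof -
  have "integrable lborel (\<lambda>x. indicator {\<alpha>..\<beta>} x * f x)"
    by (rule integrable_if_bounded_on_Icc[of _ \<alpha> \<beta> B]) (use m B in \<open>auto simp: indicator_def\<close>)
  then have si: "set_integrable lborel {\<alpha>..\<beta>} f" by (simp add: set_integrable_def)
  have "(LINT x : {\<alpha>..\<beta>} | lborel. f x) = integral {\<alpha>..\<beta>} f"
    by (rule set_borel_integral_eq_integral(2)[OF si])
  also have "\<dots> = I" using I by (rule integral_unique)
  finally show ?thesis by (simp add: set_lebesgue_integral_def)
qed

lemma abs_sum_products_le: "\<bar>x*p + y*q\<bar> \<le> \<bar>x\<bar>*\<bar>p\<bar> + \<bar>y\<bar>*\<bar>q\<bar>" for x p y q :: real
  by (metis abs_mult abs_triangle_ineq)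

lemma borel_measurable_section_snd:
  fixes f :: "real \<times> real \<Rightarrow> real"
  assumes "f \<in> borel_measurable borel"
  shows "(\<lambda>t. f (\<xi>, t)) \<in> borel_measurable borel"
proof -
  have "(\<lambda>t::real. (\<xi>, t)) \<in> borel_measurable borel"
    by (intro borel_measurable_continuous_onI continuous_intros)
  from measurable_compose[OF this assms] show ?thesis by simp
qed

lemma borel_measurable_section_fst:
  fixes f :: "real \<times> real \<Rightarrow> real"
  assumes "f \<in> borel_measurable borel"
  shows "(\<lambda>x. f (x, t)) \<in> borel_measurable borel"
proof -
  have "(\<lambda>x::real. (x, t)) \<in> borel_measurable borel"
    by (intro borel_measurable_continuous_onI continuous_intros)
  from measurable_compose[OF this assms] show ?thesis by simp
qed

lemma variation_sum_le_monotone_difference: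
  fixes f P N :: "real \<Rightarrow> real"
  assumes f_eq: "\<And>x. f x = P x - N x" and mono_P: "mono P" and mono_N: "mono N"
    and P_bounds: "\<And>x. 0 \<le> P x \<and> P x \<le> B" and N_bounds: "\<And>x. 0 \<le> N x \<and> N x \<le> B"
    and sorted: "sorted xs"
  shows "variation_sum f xs \<le> 2*B"
proof -
  let ?n = "length xs - 1"
  have step: "\<bar>f (xs ! Suc i) - f (xs ! i)\<bar> \<le> (P (xs ! Suc i) - P (xs ! i)) + (N (xs ! Suc i) - N (xs ! i))"
    if i: "i < ?n" for i
  proof -
    have "xs ! i \<le> xs ! Suc i" using sorted i by (simp add: sorted_iff_nth_mono)
    then have "P (xs ! i) \<le> P (xs ! Suc i)" "N (xs ! i) \<le> N (xs ! Suc i)"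
      using mono_P mono_N by (auto dest: monoD)
    then show ?thesis unfolding f_eq by linarith
  qed
  have "variation_sum f xs \<le> (\<Sum>i<?n. (P (xs ! Suc i) - P (xs ! i)) + (N (xs ! Suc i) - N (xs ! i)))"
    unfolding variation_sum_def by (rule sum_mono) (use step in auto)
  also have "\<dots> = (P (xs ! ?n) - P (xs ! 0)) + (N (xs ! ?n) - N (xs ! 0))"
    using sum_lessThan_telescope[of "\<lambda>i. P (xs ! i)" ?n] sum_lessThan_telescope[of "\<lambda>i. N (xs ! i)" ?n]
    by (simp add: sum.distrib)
  also have "\<dots> \<le> 2*B"
    using P_bounds[of "xs ! ?n"] P_bounds[of "xs ! 0"] N_bounds[of "xs ! ?n"] N_bounds[of "xs ! 0"]
    by linarith
  finally show ?thesis .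
qed

section \<open>Test functions\<close>

locale test_function =
  fixes S :: "(real \<times> real) set" and \<phi> phx pht :: "real \<times> real \<Rightarrow> real"
  assumes test_fun: "test_fun S \<phi> phx pht"
begin

lemma deriv_x: "((\<lambda>s. \<phi> (s, t)) has_real_derivative phx (\<xi>, t)) (at \<xi>)"
  using test_fun by (simp add: test_fun_def)

lemma deriv_t: "((\<lambda>s. \<phi> (\<xi>, s)) has_real_derivative pht (\<xi>, t)) (at t)"
  using test_fun by (simp add: test_fun_def)

lemma continuous_phx: "continuous_on UNIV phx"
  and continuous_pht: "continuous_on UNIV pht"
  using test_fun by (auto simp: test_fun_def)

definition supp :: "(real \<times> real) set" where "supp = closure {p. \<phi> p \<noteq> 0}"

lemma supp: "compact supp" "supp \<subseteq> S" "closed supp"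
  using test_fun by (auto simp: test_fun_def supp_def)

lemma phi_outside_supp: "p \<notin> supp \<Longrightarrow> \<phi> p = 0"
  using closure_subset[of "{p. \<phi> p \<noteq> 0}"] by (auto simp: supp_def)

(* The partial derivatives vanish off the (closed) support, since phi vanishes on an
   open neighbourhood there. *)
lemma phx_outside_supp: assumes "p \<notin> supp" shows "phx p = 0"
proof -
  obtain \<xi> t where p: "p = (\<xi>, t)" by (cases p)
  have "open ((\<lambda>s. (s, t)) -` (- supp))"
    using supp(3) by (intro continuous_open_vimage) (auto intro!: continuous_intros)
  then have o: "open {s. (s, t) \<in> - supp}" by (simp add: vimage_def)
  have d0: "((\<lambda>s. 0::real) has_real_derivative 0) (at \<xi>)" by simp
  have "((\<lambda>s. \<phi> (s, t)) has_real_derivative 0) (at \<xi>)"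
    by (rule has_field_derivative_transform_within_open[OF d0 o]) (use assms p phi_outside_supp in auto)
  then show ?thesis using DERIV_unique[OF deriv_x] p by auto
qed

lemma pht_outside_supp: assumes "p \<notin> supp" shows "pht p = 0"
proof -
  obtain \<xi> t where p: "p = (\<xi>, t)" by (cases p)
  have "open ((\<lambda>s. (\<xi>, s)) -` (- supp))"
    using supp(3) by (intro continuous_open_vimage) (auto intro!: continuous_intros)
  then have o: "open {s. (\<xi>, s) \<in> - supp}" by (simp add: vimage_def)
  have d0: "((\<lambda>s. 0::real) has_real_derivative 0) (at t)" by simp
  have "((\<lambda>s. \<phi> (\<xi>, s)) has_real_derivative 0) (at t)"
    by (rule has_field_derivative_transform_within_open[OF d0 o]) (use assms p phi_outside_supp in auto)
  then show ?thesis using DERIV_unique[OF deriv_t] p by auto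
qed

lemma bounded_if_vanishes_outside_supp:
  fixes f :: "real \<times> real \<Rightarrow> real"
  assumes "continuous_on UNIV f" "\<And>p. p \<notin> supp \<Longrightarrow> f p = 0"
  shows "\<exists>B. \<forall>p. \<bar>f p\<bar> \<le> B"
proof -
  have "bounded (f ` supp)"
    by (rule compact_imp_bounded, rule compact_continuous_image)
       (use assms(1) supp(1) continuous_on_subset in auto)
  then obtain B where B: "\<forall>x\<in>f ` supp. norm x \<le> B" by (auto simp: bounded_iff)
  have "\<bar>f p\<bar> \<le> max B 0" for p
    using B assms(2)[of p] by (cases "p \<in> supp") auto
  then show ?thesis by blast
qed

lemma phi_lipschitz_x:
  assumes B: "\<forall>p. \<bar>phx p\<bar> \<le> B"
  shows "\<bar>\<phi> (x, t) - \<phi> (y, t)\<bar> \<le> B * \<bar>x - y\<bar>"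
proof -
  have "norm ((\<lambda>s. \<phi> (s, t)) x - (\<lambda>s. \<phi> (s, t)) y) \<le> B * norm (x - y)"
    by (rule field_differentiable_bound[of UNIV _ "\<lambda>s. phx (s, t)"])
       (use B deriv_x in \<open>auto intro: has_field_derivative_at_within\<close>)
  then show ?thesis by simp
qed

(* Joint continuity of phi: continuity in t plus a uniform Lipschitz bound in xi. *)
lemma continuous_phi: "continuous_on UNIV \<phi>"
proof -
  obtain B where B: "\<forall>p. \<bar>phx p\<bar> \<le> B"
    using bounded_if_vanishes_outside_supp[OF continuous_phx phx_outside_supp] by auto
  have "isCont \<phi> p0" for p0
  proof -
    obtain x0 t0 where p0: "p0 = (x0, t0)" by (cases p0)
    have c1: "((\<lambda>p. \<phi> (x0, snd p)) \<longlongrightarrow> \<phi> (x0, t0)) (at p0)"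
    proof -
      have "isCont (\<lambda>s. \<phi> (x0, s)) t0" using deriv_t by (rule DERIV_isCont)
      then have "isCont (\<lambda>p. \<phi> (x0, snd p)) p0"
        using isCont_o2[where f=snd and a=p0 and g="\<lambda>s. \<phi> (x0, s)"] p0
        by (auto intro: continuous_intros)
      then show ?thesis using p0 by (simp add: isCont_def)
    qed
    have c2: "((\<lambda>p. \<phi> p - \<phi> (x0, snd p)) \<longlongrightarrow> 0) (at p0)"
    proof (rule Lim_null_comparison)
      show "\<forall>\<^sub>F p in at p0. norm (\<phi> p - \<phi> (x0, snd p)) \<le> B * \<bar>fst p - x0\<bar>"
        using phi_lipschitz_x[OF B] by (intro always_eventually allI) (metis prod.collapse real_norm_def)
      have "((\<lambda>p. B * \<bar>fst p - x0\<bar>) \<longlongrightarrow> B * \<bar>fst p0 - x0\<bar>) (at p0)"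
        by (intro tendsto_intros)
      then show "((\<lambda>p. B * \<bar>fst p - x0\<bar>) \<longlongrightarrow> 0) (at p0)" using p0 by simp
    qed
    have "((\<lambda>p. (\<phi> p - \<phi> (x0, snd p)) + \<phi> (x0, snd p)) \<longlongrightarrow> 0 + \<phi> (x0, t0)) (at p0)"
      by (rule tendsto_add[OF c2 c1])
    then show ?thesis using p0 by (simp add: isCont_def)
  qed
  then show ?thesis by (simp add: continuous_at_imp_continuous_on)
qed

lemma continuous_phi_t: "continuous_on A (\<lambda>t. \<phi> (\<xi>, t))"
  by (intro continuous_on_compose2[OF continuous_phi]) (auto intro!: continuous_intros)

lemma continuous_phi_x: "continuous_on A (\<lambda>x. \<phi> (x, t))"
  by (intro continuous_on_compose2[OF continuous_phi]) (auto intro!: continuous_intros)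

lemma supp_in_box:
  assumes S: "S \<subseteq> {p. fst p > 0}"
  shows "\<exists>a R. 0 < a \<and> (\<forall>p\<in>supp. a \<le> fst p \<and> fst p \<le> R \<and> \<bar>snd p\<bar> \<le> R)"
proof -
  obtain R where R: "\<forall>p\<in>supp. norm p \<le> R"
    using compact_imp_bounded[OF supp(1)] by (auto simp: bounded_iff)
  obtain a where a: "a > 0" "\<forall>p\<in>supp. a \<le> fst p"
  proof (cases "supp = {}")
    case True then show ?thesis using that[of 1] by auto
  next
    case False
    obtain q where q: "q \<in> supp" "\<forall>p\<in>supp. fst q \<le> fst p"
    proof -
      have "continuous_on supp fst" by (intro continuous_intros)
      then show ?thesis using continuous_attains_inf[OF supp(1) False, of fst] that by blast
    qed
    show ?thesis using that[of "fst q"] q supp(2) S by auto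
  qed
  have "\<bar>fst p\<bar> \<le> R \<and> \<bar>snd p\<bar> \<le> R" if "p \<in> supp" for p
    using that R norm_fst_le[of "fst p" "snd p"] norm_snd_le[of "snd p" "fst p"] by auto
  then show ?thesis using a by fastforce
qed

end

section \<open>The explicit solution\<close>

lemma u_vanishes_neg: "\<xi> < 0 \<Longrightarrow> u_expl g \<xi> t = 0"
  by (simp add: u_expl_def)

lemma u_vanishes_beyond: "g > 0 \<Longrightarrow> \<xi> > 1/g \<Longrightarrow> u_expl g \<xi> t = 0"
  by (cases "t < 0") (auto simp add: u_expl_def)

lemma u_nonneg: "0 \<le> u_expl g \<xi> t"
  by (simp add: u_expl_def)

lemma u_inner:
  assumes g: "g > 0" and "0 \<le> \<xi>" "\<xi> \<le> 1/g - t" "0 \<le> t" "t < 1/g"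
  shows "u_expl g \<xi> t = (g*\<xi>) powr (1/g) / (1 - g*t) powr (1/g)"
proof -
  have "1 - g*t > 0" using assms by (simp add: field_simps)
  then show ?thesis using assms by (simp add: u_expl_def powr_divide)
qed

(* The formula in the fan region; on the common boundary xi = 1/g - t both formulas give 1. *)
lemma u_fan:
  assumes g: "g > 0" and "0 < t" "0 \<le> \<xi>" "1/g - t \<le> \<xi>" "\<xi> \<le> 1/g"
  shows "u_expl g \<xi> t = (1 - g*\<xi>) powr (1/g) / (g*t) powr (1/g)"
proof (cases "\<xi> \<le> 1/g - t \<and> t < 1/g")
  case True
  have e: "\<xi> = 1/g - t" using True assms by linarith
  have "1 - g*t > 0" using True g by (simp add: field_simps)
  have a: "g*\<xi>/(1 - g*t) = 1" using e g \<open>1 - g*t > 0\<close> by (simp add: field_simps)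
  have b: "1 - g*\<xi> = g*t" using e g by (simp add: field_simps)
  have "u_expl g \<xi> t = (g*\<xi>/(1 - g*t)) powr (1/g)" using True assms by (simp add: u_expl_def)
  then have l: "u_expl g \<xi> t = 1" unfolding a by simp
  have "g*t > 0" using g assms by simp
  then show ?thesis unfolding l b using g assms by simp
next
  case False
  have "1 - g*\<xi> \<ge> 0" using assms by (simp add: field_simps)
  then show ?thesis using False assms by (auto simp add: u_expl_def powr_divide)
qed

(* In both regions the base of the power lies in [0, 1]. *)
lemma u_le_one:
  assumes g: "g > 0" shows "u_expl g \<xi> t \<le> 1"
proof -
  consider (inner) "0 \<le> \<xi> \<and> \<xi> \<le> 1/g - t \<and> 0 \<le> t \<and> t < 1/g"
    | (fan) "\<not>(0 \<le> \<xi> \<and> \<xi> \<le> 1/g - t \<and> 0 \<le> t \<and> t < 1/g)" "max 0 (1/g - t) \<le> \<xi> \<and> \<xi> \<le> 1/g"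
    | (zero) "\<not>(0 \<le> \<xi> \<and> \<xi> \<le> 1/g - t \<and> 0 \<le> t \<and> t < 1/g)" "\<not>(max 0 (1/g - t) \<le> \<xi> \<and> \<xi> \<le> 1/g)"
    by blast
  then show ?thesis
  proof cases
    case inner
    then have p: "1 - g*t > 0" "g*\<xi> \<le> 1 - g*t" "0 \<le> g*\<xi>" using g by (auto simp: field_simps)
    then have "g*\<xi>/(1-g*t) \<le> 1" "0 \<le> g*\<xi>/(1-g*t)" by auto
    then show ?thesis using inner g p by (simp add: u_expl_def) (rule powr_le1, auto)
  next
    case fan
    have h: "1/g - t \<le> \<xi>" "\<xi> \<le> 1/g" "0 \<le> \<xi>" "0 < 1/g" using fan g by auto
    have t: "t > 0"
    proof (rule ccontr)
      assume "\<not> t > 0"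
      then have "t = 0" using h by linarith
      then show False using fan(1) h by auto
    qed
    then have p: "1 - g*\<xi> \<le> g*t" "0 \<le> 1 - g*\<xi>" using fan g by (auto simp: field_simps)
    then have "(1-g*\<xi>)/(g*t) \<le> 1" "0 \<le> (1-g*\<xi>)/(g*t)" using t g by auto
    then have "((1-g*\<xi>)/(g*t)) powr (1/g) \<le> 1" using g by (intro powr_le1) auto
    then show ?thesis using fan t by (auto simp add: u_expl_def)
  next
    case zero
    then show ?thesis unfolding u_expl_def if_not_P[OF zero(1)] if_not_P[OF zero(2)] by simp
  qed
qed

lemma u_bounded_by_indicator: "g > 0 \<Longrightarrow> \<bar>u_expl g \<xi> t\<bar> \<le> indicator {0..1/g} \<xi>"
  using u_nonneg[of g \<xi> t] u_le_one[of g \<xi> t] u_vanishes_neg[of \<xi> g t] u_vanishes_beyond[of g \<xi> t]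
  by (auto simp: indicator_def not_le)

lemma borel_measurable_u: "(\<lambda>p. u_expl g (fst p) (snd p)) \<in> borel_measurable borel"
  unfolding u_expl_def borel_prod[symmetric] by measurable

lemma borel_measurable_u_section: "(\<lambda>\<xi>. u_expl g \<xi> t) \<in> borel_measurable borel"
  using borel_measurable_section_fst[OF borel_measurable_u] by simp

section \<open>The space L^\<infinity>(L^1 \<inter> BV)\<close>

lemma integrable_u: assumes g: "g > 0" shows "integrable lborel (\<lambda>\<xi>. u_expl g \<xi> t)"
proof -
  have i: "integrable lborel (indicator {0..1/g} :: real \<Rightarrow> real)"
    by (rule integrable_real_indicator) (use g in auto)
  show ?thesis
    by (rule Bochner_Integration.integrable_bound[OF i])
       (auto simp: borel_measurable_u_section u_bounded_by_indicator g)
qed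

lemma L1_norm_u: assumes g: "g > 0" shows "(\<integral>\<xi>. \<bar>u_expl g \<xi> t\<bar> \<partial>lborel) \<le> 1/g"
proof -
  have "(\<integral>\<xi>. \<bar>u_expl g \<xi> t\<bar> \<partial>lborel) \<le> (\<integral>\<xi>. indicator {0..1/g} \<xi> \<partial>lborel)"
    using g by (intro integral_mono) (auto simp: integrable_u u_bounded_by_indicator)
  also have "\<dots> = 1/g" using g by simp
  finally show ?thesis .
qed

(* The point where u(., t) attains its maximum 1. *)
definition peak :: "real \<Rightarrow> real \<Rightarrow> real" where "peak g t = max 0 (1/g - t)"

lemma u_mono_before_peak:
  assumes g: "g > 0" and t: "t \<ge> 0" and le: "\<xi> \<le> \<xi>'" "\<xi>' \<le> peak g t"
  shows "u_expl g \<xi> t \<le> u_expl g \<xi>' t"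
proof (cases "\<xi> < 0")
  case True then show ?thesis by (simp add: u_vanishes_neg u_nonneg)
next
  case xi_nonneg: False
  show ?thesis
  proof (cases "peak g t = 0")
    case True
    then have "\<xi> = \<xi>'" using xi_nonneg le by auto
    then show ?thesis by simp
  next
    case False
    then have m: "peak g t = 1/g - t" "t < 1/g" by (auto simp: peak_def)
    have "(g*\<xi>) powr (1/g) / (1 - g*t) powr (1/g) \<le> (g*\<xi>') powr (1/g) / (1 - g*t) powr (1/g)"
      using xi_nonneg le g by (intro divide_right_mono powr_mono2) auto
    then show ?thesis using u_inner[OF g, of \<xi> t] u_inner[OF g, of \<xi>' t] xi_nonneg le m t by auto
  qed
qed

lemma u_antimono_after_peak:
  assumes g: "g > 0" and t: "t \<ge> 0" and le: "peak g t \<le> \<xi>" "\<xi> \<le> \<xi>'"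
  shows "u_expl g \<xi>' t \<le> u_expl g \<xi> t"
proof (cases "\<xi>' > 1/g")
  case True then show ?thesis using g by (simp add: u_vanishes_beyond u_nonneg)
next
  case False
  show ?thesis
  proof (cases "t = 0")
    case True
    then have "\<xi> = \<xi>'" using le False by (auto simp: peak_def)
    then show ?thesis by simp
  next
    case t0: False
    then have t0: "t > 0" using t by simp
    have h: "0 \<le> \<xi>" "1/g - t \<le> \<xi>" using le by (auto simp: peak_def)
    have "(1 - g*\<xi>') powr (1/g) / (g*t) powr (1/g) \<le> (1 - g*\<xi>) powr (1/g) / (g*t) powr (1/g)"
      using False le g h by (intro divide_right_mono powr_mono2) (auto simp: field_simps)
    then show ?thesis using u_fan[OF g t0, of \<xi>] u_fan[OF g t0, of \<xi>'] False le h by auto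
  qed
qed

(* u(., t) increases up to the peak and decreases afterwards, so it is the difference of
   two monotone functions with values in [0, 1]. *)
lemma variation_u:
  assumes g: "g > 0" and t: "t \<ge> 0" and sorted: "sorted xs"
  shows "variation_sum (\<lambda>\<xi>. u_expl g \<xi> t) xs \<le> 2"
proof -
  define m where "m = peak g t"
  define P where "P x = u_expl g (min x m) t" for x
  define N where "N x = u_expl g m t - u_expl g (max x m) t" for x
  have f_eq: "u_expl g x t = P x - N x" for x by (cases "x \<le> m") (auto simp: P_def N_def)
  have mono_P: "mono P" unfolding mono_def P_def
    using u_mono_before_peak[OF g t] by (auto simp: m_def)
  have mono_N: "mono N" unfolding mono_def N_def
    using u_antimono_after_peak[OF g t] by (auto simp: m_def intro!: diff_left_mono)
  have "0 \<le> P x \<and> P x \<le> 1" for x using u_nonneg u_le_one[OF g] by (auto simp: P_def)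
  moreover have "0 \<le> N x \<and> N x \<le> 1" for x
    using u_nonneg[of g "max x m" t] u_le_one[OF g, of m t] u_antimono_after_peak[OF g t, of m "max x m"]
    by (auto simp: N_def m_def)
  ultimately show ?thesis
    using variation_sum_le_monotone_difference[OF f_eq mono_P mono_N _ _ sorted, of 1] by simp
qed

lemma Linf_L1_BV_u: assumes g: "g > 0" shows "Linf_L1_BV (u_expl g)"
  unfolding Linf_L1_BV_def
proof (intro conjI exI[of _ "1/g + 2"] allI impI)
  show "(\<lambda>p. u_expl g (fst p) (snd p)) \<in> borel_measurable borel" by (rule borel_measurable_u)
  fix t :: real assume t: "0 \<le> t"
  show "integrable lborel (\<lambda>\<xi>. u_expl g \<xi> t)" using g by (rule integrable_u)
  show "(\<integral>\<xi>. \<bar>u_expl g \<xi> t\<bar> \<partial>lborel) \<le> 1/g + 2" using L1_norm_u[OF g, of t] by simp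
  fix xs :: "real list" assume "sorted xs"
  then show "variation_sum (\<lambda>\<xi>. u_expl g \<xi> t) xs \<le> 1/g + 2"
    using variation_u[OF g t] g by (smt (verit) divide_pos_pos)
qed

section \<open>Continuity in xi and the entropy inequalities\<close>

(* Closed forms of u(., t) on xi > 0 as continuous expressions, before and after the fan
   reaches xi = 0 at t = 1/g. *)
lemma u_closed_form_early:
  assumes g: "g > 0" and t: "0 < t" "t < 1/g" and x: "\<xi> > 0"
  shows "u_expl g \<xi> t = (max 0 (min (g*\<xi>/(1-g*t)) ((1-g*\<xi>)/(g*t)))) powr (1/g)"
proof -
  have c: "1 - g*t > 0" using g t by (simp add: field_simps)
  have gt: "g*t > 0" using g t by simp
  consider "\<xi> \<le> 1/g - t" | "1/g - t < \<xi>" "\<xi> \<le> 1/g" | "\<xi> > 1/g" by linarith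
  then show ?thesis
  proof cases
    case 1
    then have a: "g*\<xi> \<le> 1 - g*t" using g by (simp add: field_simps)
    then have "g*\<xi>/(1-g*t) \<le> 1" using c by simp
    moreover have "1 \<le> (1-g*\<xi>)/(g*t)" using a gt by simp
    moreover have "0 \<le> g*\<xi>/(1-g*t)" using c g x by simp
    ultimately show ?thesis using 1 t x by (simp add: u_expl_def)
  next
    case 2
    then have a: "g*\<xi> > 1 - g*t" "g*\<xi> \<le> 1" using g by (auto simp: field_simps)
    then have "1 < g*\<xi>/(1-g*t)" using c by simp
    moreover have "(1-g*\<xi>)/(g*t) < 1" using a gt by simp
    moreover have "0 \<le> (1-g*\<xi>)/(g*t)" using a gt by simp
    ultimately show ?thesis using 2 t x by (simp add: u_expl_def)
  next
    case 3
    then have a: "g*\<xi> > 1" using g by (auto simp: field_simps)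
    then have "(1-g*\<xi>)/(g*t) < 0" using gt by (simp add: divide_neg_pos)
    then show ?thesis using 3 g by (simp add: u_vanishes_beyond)
  qed
qed

lemma u_closed_form_late:
  assumes g: "g > 0" and t: "t \<ge> 1/g" and x: "\<xi> > 0"
  shows "u_expl g \<xi> t = (max 0 ((1-g*\<xi>)/(g*t))) powr (1/g)"
proof -
  have gt: "g*t > 0" using g t by (smt (verit) divide_pos_pos mult_pos_pos)
  show ?thesis
  proof (cases "\<xi> \<le> 1/g")
    case True
    then have "0 \<le> (1-g*\<xi>)/(g*t)" using g gt by (simp add: field_simps)
    then show ?thesis using True t x g by (simp add: u_expl_def)
  next
    case False
    then have "g*\<xi> > 1" using g by (auto simp: field_simps)
    then have "(1-g*\<xi>)/(g*t) < 0" using gt by (simp add: divide_neg_pos)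
    then show ?thesis using False g by (simp add: u_vanishes_beyond)
  qed
qed

lemma isCont_u:
  assumes g: "g > 0" and t: "t > 0" and x: "\<xi>0 > 0"
  shows "isCont (\<lambda>\<xi>. u_expl g \<xi> t) \<xi>0"
proof -
  have near: "eventually (\<lambda>\<xi>. \<xi> > 0) (nhds \<xi>0)"
    using eventually_nhds_in_open[of "{0<..}" \<xi>0] x by simp
  show ?thesis
  proof (cases "t < 1/g")
    case True
    have ev: "eventually (\<lambda>\<xi>. u_expl g \<xi> t = (max 0 (min (g*\<xi>/(1-g*t)) ((1-g*\<xi>)/(g*t)))) powr (1/g)) (nhds \<xi>0)"
      using near by (rule eventually_mono) (use u_closed_form_early[OF g t True] in auto)
    have "isCont (\<lambda>\<xi>. (max 0 (min (g*\<xi>/(1-g*t)) ((1-g*\<xi>)/(g*t)))) powr (1/g)) \<xi>0"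
      using g t True by (intro continuous_powr_real continuous_intros) (auto simp: field_simps)
    then show ?thesis using isCont_cong[OF ev] by simp
  next
    case False
    have ev: "eventually (\<lambda>\<xi>. u_expl g \<xi> t = (max 0 ((1-g*\<xi>)/(g*t))) powr (1/g)) (nhds \<xi>0)"
      using near by (rule eventually_mono) (use u_closed_form_late[of g t] g False in auto)
    have "isCont (\<lambda>\<xi>. (max 0 ((1-g*\<xi>)/(g*t))) powr (1/g)) \<xi>0"
      using g t by (intro continuous_powr_real continuous_intros) auto
    then show ?thesis using isCont_cong[OF ev] by simp
  qed
qed

(* u(., t) is continuous at every xi0 \<noteq> 0, so both one-sided limits coincide and the
   entropy inequalities hold with equality. *)
lemma entropy_inequalities_u:
  assumes g: "g > 0"
  shows "\<forall>t>0. \<forall>\<xi>0.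
        (\<xi>0 < 0 \<longrightarrow> Lim (at_left \<xi>0) (\<lambda>\<xi>. u_expl g \<xi> t) \<ge> Lim (at_right \<xi>0) (\<lambda>\<xi>. u_expl g \<xi> t)) \<and>
        (\<xi>0 > 0 \<longrightarrow> Lim (at_left \<xi>0) (\<lambda>\<xi>. u_expl g \<xi> t) \<le> Lim (at_right \<xi>0) (\<lambda>\<xi>. u_expl g \<xi> t))"
proof (intro allI impI conjI)
  fix t \<xi>0 :: real assume t: "t > 0"
  {
    assume x: "\<xi>0 < 0"
    have ev: "eventually (\<lambda>\<xi>. u_expl g \<xi> t = 0) (nhds \<xi>0)"
      using eventually_nhds_in_open[of "{..<0}" \<xi>0] x
      by (auto elim: eventually_mono simp: u_vanishes_neg)
    have "isCont (\<lambda>\<xi>. u_expl g \<xi> t) \<xi>0" using isCont_cong[OF ev] by simp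
    then show "Lim (at_left \<xi>0) (\<lambda>\<xi>. u_expl g \<xi> t) \<ge> Lim (at_right \<xi>0) (\<lambda>\<xi>. u_expl g \<xi> t)"
      by (simp add: Lim_at_left_isCont Lim_at_right_isCont)
  }
  {
    assume x: "\<xi>0 > 0"
    then show "Lim (at_left \<xi>0) (\<lambda>\<xi>. u_expl g \<xi> t) \<le> Lim (at_right \<xi>0) (\<lambda>\<xi>. u_expl g \<xi> t)"
      using isCont_u[OF g t x] by (simp add: Lim_at_left_isCont Lim_at_right_isCont)
  }
qed

section \<open>The datum and the weak formulation on xi < 0\<close>

(* The transformed datum: for xi > 0 the argument of f_I is (g xi)^((1+g)/g)/(1+g), which
   lies in [0, 1/(1+g)] exactly when xi \<le> 1/g; for xi < 0 it is negative. *)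
lemma uI_formula:
  assumes g: "g > 0"
  shows "uI_of g (indicator {0 .. 1 / (1 + g)}) \<xi> = (g * \<xi>) powr (1/g) * indicator {0 .. 1/g} \<xi>"
proof (cases "\<xi> > 0")
  case True
  have "g*\<xi> > 0" using g True by simp
  have "(g*\<xi>) powr ((1+g)/g) \<le> 1 \<longleftrightarrow> g*\<xi> \<le> 1"
    using powr_le_powr_iff[of "(1+g)/g" "g*\<xi>" 1] \<open>g*\<xi> > 0\<close> g by simp
  moreover have "g*\<xi> \<le> 1 \<longleftrightarrow> \<xi> \<le> 1/g" using g by (simp add: field_simps)
  moreover have "1 / (1 + g) * (g*\<xi>) powr ((1+g)/g) \<le> 1/(1+g) \<longleftrightarrow> (g*\<xi>) powr ((1+g)/g) \<le> 1"
    using g by (simp add: divide_le_eq_1 mult.commute[of "1/(1+g)"] divide_le_cancel)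
  ultimately have "indicator {0 .. 1 / (1 + g)} (1 / (1 + g) * (g*\<xi>) powr ((1+g)/g)) = (indicator {0..1/g} \<xi> :: real)"
    using True g by (simp add: indicator_def)
  then show ?thesis using True g by (simp add: uI_of_def)
next
  case False
  then consider "\<xi> = 0" | "\<xi> < 0" by linarith
  then show ?thesis
  proof cases
    case 2
    have "(g * \<bar>\<xi>\<bar>) powr ((1 + g) / g) > 0" using g 2 by simp
    then have "sgn \<xi> * (1 / (1 + g)) * (g * \<bar>\<xi>\<bar>) powr ((1 + g) / g) < 0" using 2 g
      by (simp add: mult_neg_pos)
    then show ?thesis using 2 by (simp add: uI_of_def indicator_def)
  qed (simp add: uI_of_def)
qed

lemma u_initial_value:
  assumes g: "g > 0" and x: "\<xi> > 0"
  shows "u_expl g \<xi> 0 = uI_of g (indicator {0 .. 1 / (1 + g)}) \<xi>"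
proof (cases "\<xi> \<le> 1/g")
  case True then show ?thesis using g x by (simp add: uI_formula u_expl_def)
next
  case False then show ?thesis using g x by (simp add: uI_formula u_vanishes_beyond)
qed

lemma borel_measurable_uI:
  assumes g: "g > 0" shows "uI_of g (indicator {0 .. 1 / (1 + g)}) \<in> borel_measurable borel"
proof -
  have "uI_of g (indicator {0 .. 1 / (1 + g)}) = (\<lambda>\<xi>. (g * \<xi>) powr (1/g) * indicator {0 .. 1/g} \<xi>)"
    by (rule ext) (simp add: uI_formula[OF g])
  moreover have "(\<lambda>\<xi>. (g * \<xi>) powr (1/g) * indicator {0 .. 1/g} \<xi> :: real) \<in> borel_measurable borel"
    by measurable
  ultimately show ?thesis by simp
qed

lemma weak_sol_neg_u:
  assumes g: "g > 0" shows "weak_sol_neg g (uI_of g (indicator {0 .. 1 / (1 + g)})) (u_expl g)"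
  unfolding weak_sol_neg_def
proof (intro allI impI)
  fix \<phi> phx pht :: "real \<times> real \<Rightarrow> real"
  have a: "(\<lambda>p. indicator {p. fst p < 0 \<and> snd p \<ge> 0} p *\<^sub>R
      (u_expl g (fst p) (snd p) * pht p + flux g (u_expl g (fst p) (snd p)) * phx p)) = (\<lambda>p. 0)"
    by (auto simp: indicator_def u_vanishes_neg flux_def)
  have b: "(\<lambda>\<xi>. indicator {..<0} \<xi> *\<^sub>R (uI_of g (indicator {0 .. 1 / (1 + g)}) \<xi> * \<phi> (\<xi>, 0))) = (\<lambda>\<xi>. 0)"
    using g by (auto simp: uI_formula indicator_def)
  show "(LINT p : {p. fst p < 0 \<and> snd p \<ge> 0} | lborel.
            u_expl g (fst p) (snd p) * pht p + flux g (u_expl g (fst p) (snd p)) * phx p)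
        + (LINT \<xi> : {..<0} | lborel. uI_of g (indicator {0 .. 1 / (1 + g)}) \<xi> * \<phi> (\<xi>, 0)) = 0"
    unfolding set_lebesgue_integral_def a b by simp
qed

section \<open>The common derivative v = u_t = (flux u)_xi\<close>

(* v is the t-derivative of u and also the xi-derivative of flux(u), away from the lines
   xi = 1/g - t and xi = 1/g.  In the inner region u_t = u/(1 - g t), in the fan
   u_t = - u/(g t). *)
definition u_dt :: "real \<Rightarrow> real \<Rightarrow> real \<Rightarrow> real" where
  "u_dt g \<xi> t = (if 0 < \<xi> \<and> \<xi> < 1/g - t \<and> 0 \<le> t then u_expl g \<xi> t / (1 - g*t)
     else if 1/g - t < \<xi> \<and> \<xi> < 1/g \<and> 0 < t then - u_expl g \<xi> t / (g*t) else 0)"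

(* Smooth extensions of u and of flux(u) from the inner region and from the fan. *)
definition u_inner_fn :: "real \<Rightarrow> real \<Rightarrow> real \<Rightarrow> real" where
  "u_inner_fn g \<xi> t = (g*\<xi>) powr (1/g) * (1 - g*t) powr (-1/g)"
definition u_fan_fn :: "real \<Rightarrow> real \<Rightarrow> real \<Rightarrow> real" where
  "u_fan_fn g \<xi> t = (1 - g*\<xi>) powr (1/g) * (g*t) powr (-1/g)"
definition flux_inner_fn :: "real \<Rightarrow> real \<Rightarrow> real \<Rightarrow> real" where
  "flux_inner_fn g \<xi> t = (g*\<xi>) powr ((1+g)/g) * (1 - g*t) powr (-(1+g)/g) / (1+g)"
definition flux_fan_fn :: "real \<Rightarrow> real \<Rightarrow> real \<Rightarrow> real" where
  "flux_fan_fn g \<xi> t = (1 - g*\<xi>) powr ((1+g)/g) * (g*t) powr (-(1+g)/g) / (1+g)"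

lemma u_eq_inner_fn:
  assumes g: "g > 0" and "0 \<le> \<xi>" "\<xi> \<le> 1/g - t" "0 \<le> t" "t < 1/g"
  shows "u_expl g \<xi> t = u_inner_fn g \<xi> t"
proof -
  have "1 - g*t > 0" using assms by (simp add: field_simps)
  then show ?thesis using u_inner[OF assms] by (simp add: u_inner_fn_def powr_minus_divide)
qed

lemma u_eq_fan_fn:
  assumes g: "g > 0" and "0 < t" "0 \<le> \<xi>" "1/g - t \<le> \<xi>" "\<xi> \<le> 1/g"
  shows "u_expl g \<xi> t = u_fan_fn g \<xi> t"
  using u_fan[OF assms] assms by (simp add: u_fan_fn_def powr_minus_divide)

lemma flux_u_inner_fn:
  assumes g: "g > 0" and "0 \<le> \<xi>" and "1 - g*t > 0"
  shows "flux g (u_inner_fn g \<xi> t) = flux_inner_fn g \<xi> t"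
proof -
  have e1: "1/g * (1+g) = (1+g)/g" and e2: "-1/g * (1+g) = -(1+g)/g"
    and e3: "(- 1 - g)/g = -((1+g)/g)" using g by (auto simp: field_simps)
  have "(u_inner_fn g \<xi> t) powr (1+g) = (g*\<xi>) powr ((1+g)/g) * (1 - g*t) powr (-(1+g)/g)"
    unfolding u_inner_fn_def using assms
    by (simp add: powr_mult powr_powr e1 e2 e3 del: minus_divide_left)
  then show ?thesis by (simp add: flux_def flux_inner_fn_def u_inner_fn_def)
qed

lemma flux_u_fan_fn:
  assumes g: "g > 0" and "1 - g*\<xi> \<ge> 0" and "t > 0"
  shows "flux g (u_fan_fn g \<xi> t) = flux_fan_fn g \<xi> t"
proof -
  have e1: "1/g * (1+g) = (1+g)/g" and e2: "-1/g * (1+g) = -(1+g)/g"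
    and e3: "(- 1 - g)/g = -((1+g)/g)" using g by (auto simp: field_simps)
  have "(u_fan_fn g \<xi> t) powr (1+g) = (1 - g*\<xi>) powr ((1+g)/g) * (g*t) powr (-(1+g)/g)"
    unfolding u_fan_fn_def using assms
    by (simp add: powr_mult powr_powr e1 e2 e3 del: minus_divide_left)
  then show ?thesis by (simp add: flux_def flux_fan_fn_def u_fan_fn_def)
qed

lemma deriv_t_u_inner_fn:
  assumes g: "g > 0" and c: "1 - g*t > 0"
  shows "((\<lambda>s. u_inner_fn g \<xi> s) has_real_derivative u_inner_fn g \<xi> t / (1 - g*t)) (at t)"
proof -
  have d: "((\<lambda>s. u_inner_fn g \<xi> s) has_real_derivative
      (g*\<xi>) powr (1/g) * ((-1/g) * (1 - g*t) powr (-1/g - 1) * (- g))) (at t)"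
    unfolding u_inner_fn_def using c by (auto intro!: derivative_eq_intros)
  have "(g*\<xi>) powr (1/g) * ((-1/g) * (1 - g*t) powr (-1/g - 1) * (- g)) = u_inner_fn g \<xi> t / (1 - g*t)"
    using g c by (simp add: u_inner_fn_def powr_diff)
  then show ?thesis using d by simp
qed

lemma deriv_t_u_fan_fn:
  assumes g: "g > 0" and t: "t > 0"
  shows "((\<lambda>s. u_fan_fn g \<xi> s) has_real_derivative - u_fan_fn g \<xi> t / (g*t)) (at t)"
proof -
  have d: "((\<lambda>s. u_fan_fn g \<xi> s) has_real_derivative
      (1 - g*\<xi>) powr (1/g) * ((-1/g) * (g*t) powr (-1/g - 1) * g)) (at t)"
    unfolding u_fan_fn_def using g t by (auto intro!: derivative_eq_intros)
  have "(1 - g*\<xi>) powr (1/g) * ((-1/g) * (g*t) powr (-1/g - 1) * g) = - u_fan_fn g \<xi> t / (g*t)"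
    using g t by (simp add: u_fan_fn_def powr_diff)
  then show ?thesis using d by simp
qed

lemma deriv_xi_flux_inner_fn:
  assumes g: "g > 0" and x: "\<xi> > 0" and c: "1 - g*t > 0"
  shows "((\<lambda>s. flux_inner_fn g s t) has_real_derivative u_inner_fn g \<xi> t / (1 - g*t)) (at \<xi>)"
proof -
  have d: "((\<lambda>s. flux_inner_fn g s t) has_real_derivative
      ((1+g)/g) * (g*\<xi>) powr ((1+g)/g - 1) * g * (1 - g*t) powr (-(1+g)/g) / (1+g)) (at \<xi>)"
    unfolding flux_inner_fn_def using g x by (auto intro!: derivative_eq_intros)
  have e: "(1+g)/g - 1 = 1/g" "-(1+g)/g = -1/g - 1" using g by (auto simp: field_simps)
  have "\<And>X Y. (1+g)/g * X * g * Y / (1+g) = X * Y"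
    using g by (simp add: divide_simps)
  then have "((1+g)/g) * (g*\<xi>) powr ((1+g)/g - 1) * g * (1 - g*t) powr (-(1+g)/g) / (1+g)
      = (g*\<xi>) powr (1/g) * (1 - g*t) powr (-1/g - 1)"
    unfolding e by simp
  also have "\<dots> = u_inner_fn g \<xi> t / (1 - g*t)" using c by (simp add: u_inner_fn_def powr_diff)
  finally show ?thesis using d by simp
qed

lemma deriv_xi_flux_fan_fn:
  assumes g: "g > 0" and x: "1 - g*\<xi> > 0" and t: "t > 0"
  shows "((\<lambda>s. flux_fan_fn g s t) has_real_derivative - u_fan_fn g \<xi> t / (g*t)) (at \<xi>)"
proof -
  have d: "((\<lambda>s. flux_fan_fn g s t) has_real_derivative
      ((1+g)/g) * (1 - g*\<xi>) powr ((1+g)/g - 1) * (- g) * (g*t) powr (-(1+g)/g) / (1+g)) (at \<xi>)"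
    unfolding flux_fan_fn_def using g x by (auto intro!: derivative_eq_intros)
  have e: "(1+g)/g - 1 = 1/g" "-(1+g)/g = -1/g - 1" using g by (auto simp: field_simps)
  have "\<And>X Y. (1+g)/g * X * (- g) * Y / (1+g) = - (X * Y)"
    using g by (simp add: divide_simps)
  then have "((1+g)/g) * (1 - g*\<xi>) powr ((1+g)/g - 1) * (- g) * (g*t) powr (-(1+g)/g) / (1+g)
      = - ((1 - g*\<xi>) powr (1/g) * (g*t) powr (-1/g - 1))"
    unfolding e by simp
  also have "\<dots> = - u_fan_fn g \<xi> t / (g*t)" using g t by (simp add: u_fan_fn_def powr_diff)
  finally show ?thesis using d by simp
qed

lemma u_dt_inner: "0 < \<xi> \<Longrightarrow> \<xi> < 1/g - t \<Longrightarrow> 0 \<le> t \<Longrightarrow> u_dt g \<xi> t = u_expl g \<xi> t / (1 - g*t)"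
  by (simp add: u_dt_def)

lemma u_dt_fan: "1/g - t < \<xi> \<Longrightarrow> \<xi> < 1/g \<Longrightarrow> 0 < t \<Longrightarrow> u_dt g \<xi> t = - u_expl g \<xi> t / (g*t)"
  by (simp add: u_dt_def)

lemma u_dt_beyond: "g > 0 \<Longrightarrow> \<xi> \<ge> 1/g \<Longrightarrow> u_dt g \<xi> t = 0"
  by (auto simp: u_dt_def)

lemma inner_region_time_bound:
  fixes g \<xi> t :: real assumes "g > 0" "0 < \<xi>" "\<xi> < 1/g - t" shows "1 - g*t > 0"
proof -
  have "g*\<xi> < g*(1/g - t)" using mult_strict_left_mono[OF assms(3) assms(1)] by simp
  then have "g*\<xi> < 1 - g*t" using assms by (simp add: right_diff_distrib)
  moreover have "0 < g*\<xi>" using assms by simp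
  ultimately show ?thesis by linarith
qed

lemma deriv_t_inner_fn_eq_u_dt:
  assumes g: "g > 0" and x: "0 < \<xi>" and t: "0 < t" "t < 1/g - \<xi>"
  shows "((\<lambda>s. u_inner_fn g \<xi> s) has_real_derivative u_dt g \<xi> t) (at t)"
proof -
  have c: "1 - g*t > 0" using inner_region_time_bound[OF g x] t by simp
  have "u_expl g \<xi> t = u_inner_fn g \<xi> t" using u_eq_inner_fn[OF g, of \<xi> t] x t by simp
  then show ?thesis using deriv_t_u_inner_fn[OF g c, of \<xi>] u_dt_inner[of \<xi> g t] x t by simp
qed

lemma deriv_t_fan_fn_eq_u_dt:
  assumes g: "g > 0" and x: "0 < \<xi>" "\<xi> < 1/g" and t: "t > 1/g - \<xi>"
  shows "((\<lambda>s. u_fan_fn g \<xi> s) has_real_derivative u_dt g \<xi> t) (at t)"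
proof -
  have t0: "t > 0" using x t by simp
  have "u_expl g \<xi> t = u_fan_fn g \<xi> t" using u_eq_fan_fn[OF g t0] x t by simp
  then show ?thesis using deriv_t_u_fan_fn[OF g t0, of \<xi>] u_dt_fan[of g t \<xi>] x t t0 by simp
qed

lemma deriv_xi_flux_u:
  assumes g: "g > 0" and t: "t > 0" and x: "\<xi> > 0" "\<xi> \<noteq> 1/g - t" "\<xi> \<noteq> 1/g"
  shows "((\<lambda>s. flux g (u_expl g s t)) has_real_derivative u_dt g \<xi> t) (at \<xi>)"
proof -
  consider (inner) "\<xi> < 1/g - t" | (fan) "1/g - t < \<xi>" "\<xi> < 1/g" | (beyond) "\<xi> > 1/g"
    using x by linarith
  then show ?thesis
  proof cases
    case inner
    have c: "1 - g*t > 0" using inner_region_time_bound[OF g x(1) inner] .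
    have eq: "flux g (u_expl g s t) = flux_inner_fn g s t" if "s \<in> {0<..<1/g - t}" for s
      using that u_eq_inner_fn[OF g, of s t] flux_u_inner_fn[OF g _ c, of s] t by (auto simp: field_simps)
    have "u_inner_fn g \<xi> t / (1 - g*t) = u_dt g \<xi> t"
      using u_eq_inner_fn[OF g, of \<xi> t] u_dt_inner[of \<xi> g t] inner x t c by (simp add: field_simps)
    then have "((\<lambda>s. flux_inner_fn g s t) has_real_derivative u_dt g \<xi> t) (at \<xi>)"
      using deriv_xi_flux_inner_fn[OF g x(1) c] by simp
    then show ?thesis
      by (rule has_field_derivative_transform_within_open[of _ _ _ "{0<..<1/g - t}"]) (use inner x eq in auto)
  next
    case fan
    have c: "1 - g*\<xi> > 0" using fan g by (simp add: field_simps)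
    have eq: "flux g (u_expl g s t) = flux_fan_fn g s t" if "s \<in> {0<..<1/g} \<inter> {1/g - t<..}" for s
    proof -
      have "0 \<le> 1 - g * s" using that g by (simp add: field_simps)
      then show ?thesis using that u_eq_fan_fn[OF g t, of s] flux_u_fan_fn[OF g _ t, of s] by auto
    qed
    have "- u_fan_fn g \<xi> t / (g*t) = u_dt g \<xi> t"
      using u_eq_fan_fn[OF g t, of \<xi>] u_dt_fan[of g t \<xi>] fan x t by simp
    then have "((\<lambda>s. flux_fan_fn g s t) has_real_derivative u_dt g \<xi> t) (at \<xi>)"
      using deriv_xi_flux_fan_fn[OF g c t] by simp
    then show ?thesis
      by (rule has_field_derivative_transform_within_open[of _ _ _ "{0<..<1/g} \<inter> {1/g - t<..}"])
         (use fan x eq in auto)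
  next
    case beyond
    have "((\<lambda>s. 0) has_real_derivative 0) (at \<xi>)" by simp
    then have "((\<lambda>s. flux g (u_expl g s t)) has_real_derivative 0) (at \<xi>)"
      by (rule has_field_derivative_transform_within_open[of _ _ _ "{1/g<..}"])
         (use beyond g in \<open>auto simp: u_vanishes_beyond flux_def\<close>)
    then show ?thesis using u_dt_beyond[OF g, of \<xi> t] beyond by simp
  qed
qed

lemma borel_measurable_u_dt: "(\<lambda>p. u_dt g (fst p) (snd p)) \<in> borel_measurable borel"
  unfolding u_dt_def u_expl_def borel_prod[symmetric] by measurable

lemma borel_measurable_flux_u: "(\<lambda>p. flux g (u_expl g (fst p) (snd p))) \<in> borel_measurable borel"
  unfolding flux_def using borel_measurable_u[of g] by measurable

lemma flux_u_bounds: "g > 0 \<Longrightarrow> 0 \<le> flux g (u_expl g \<xi> t) \<and> flux g (u_expl g \<xi> t) \<le> 1"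
proof -
  assume g: "g > 0"
  have "\<bar>u_expl g \<xi> t\<bar> powr (1+g) \<le> 1"
    using u_le_one[OF g] u_nonneg[of g \<xi> t] g by (intro powr_le1) auto
  moreover have "1 \<le> 1 + g" using g by simp
  ultimately show ?thesis using g unfolding flux_def by (simp add: divide_le_eq)
qed

lemma isCont_flux: "g > 0 \<Longrightarrow> isCont (flux g) x"
  unfolding flux_def by (intro continuous_intros continuous_powr_real) auto

section \<open>Bounds on v\<close>

(* In the inner region |v| \<le> 1/(g xi), in the fan |v| \<le> 1/(g t).  The second bound is
   not uniform, but the fan {1/g - t \<le> xi \<le> 1/g} has width t, so the weight 1/(g t) on
   the fan is integrable over bounded times. *)
definition fan_weight :: "real \<Rightarrow> real \<Rightarrow> real \<Rightarrow> real \<Rightarrow> real" where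
  "fan_weight g R \<xi> t = (if 0 < t \<and> t \<le> R \<and> 1/g - t \<le> \<xi> \<and> \<xi> \<le> 1/g then 1/(g*t) else 0)"

lemma fan_weight_nonneg: "g > 0 \<Longrightarrow> 0 \<le> fan_weight g R \<xi> t"
  by (auto simp: fan_weight_def)

lemma integrable_fan_weight:
  assumes g: "g > 0" and R: "R > 0"
  shows "integrable (lborel \<Otimes>\<^sub>M lborel) (\<lambda>p. fan_weight g R (fst p) (snd p))"
proof -
  let ?f = "\<lambda>p::real\<times>real. fan_weight g R (snd p) (fst p)"
  have m: "?f \<in> borel_measurable (lborel \<Otimes>\<^sub>M lborel)"
    unfolding fan_weight_def by measurable
  have slice: "(\<lambda>\<xi>. ?f (t, \<xi>)) = (\<lambda>\<xi>. (if 0 < t \<and> t \<le> R then 1/(g*t) else 0) * indicator {1/g - t .. 1/g} \<xi>)" for t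
    by (auto simp: fan_weight_def indicator_def fun_eq_iff)
  have inner: "(\<integral>\<xi>. norm (?f (t, \<xi>)) \<partial>lborel) = indicator {0<..R} t * (1/g)" for t
  proof (cases "0 < t \<and> t \<le> R")
    case True
    have "(\<lambda>\<xi>. norm (?f (t, \<xi>))) = (\<lambda>\<xi>. indicator {1/g - t .. 1/g} \<xi> * (1/(g*t)))"
      using True g by (auto simp: fan_weight_def indicator_def fun_eq_iff)
    then have "(\<integral>\<xi>. norm (?f (t, \<xi>)) \<partial>lborel) = measure lborel {1/g - t .. 1/g} * (1/(g*t))"
      by simp
    also have "\<dots> = 1/g" using True g by simp
    finally show ?thesis using True by simp
  qed (auto simp: fan_weight_def)
  have "integrable (lborel \<Otimes>\<^sub>M lborel) ?f"
  proof (rule lborel_pair.Fubini_integrable[OF m])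
    show "integrable lborel (\<lambda>t. \<integral>\<xi>. norm (?f (t, \<xi>)) \<partial>lborel)"
      unfolding inner using R by (intro integrable_mult_left) (auto intro!: integrable_real_indicator)
    show "AE t in lborel. integrable lborel (\<lambda>\<xi>. ?f (t, \<xi>))"
      unfolding slice
      by (intro AE_I2 integrable_mult_right)
         (auto intro!: integrable_real_indicator simp: emeasure_lborel_Icc_eq)
  qed
  moreover have "?f = (\<lambda>(x, y). fan_weight g R y x)" by auto
  ultimately show ?thesis
    using lborel_pair.integrable_product_swap_iff[of "\<lambda>p. fan_weight g R (fst p) (snd p)"] by simp
qed

lemma u_dt_bound:
  assumes g: "g > 0" and x: "0 < \<xi>" and t: "t \<le> R"
  shows "\<bar>u_dt g \<xi> t\<bar> \<le> 1/(g*\<xi>) + fan_weight g R \<xi> t"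
proof -
  have gx: "0 < g*\<xi>" using g x by simp
  consider (inner) "\<xi> < 1/g - t" "0 \<le> t" | (fan) "1/g - t < \<xi>" "\<xi> < 1/g" "0 < t"
    | (zero) "u_dt g \<xi> t = 0"
    by (cases "\<xi> < 1/g - t \<and> 0 \<le> t"; cases "1/g - t < \<xi> \<and> \<xi> < 1/g \<and> 0 < t")
       (use x in \<open>auto simp: u_dt_def\<close>)
  then show ?thesis
  proof cases
    case inner
    have l: "g*\<xi> < 1 - g*t" using inner_region_time_bound[OF g x inner(1)] inner g
      by (simp add: field_simps)
    have "\<bar>u_dt g \<xi> t\<bar> = u_expl g \<xi> t / (1 - g*t)"
      using u_dt_inner[OF x inner] l gx u_nonneg[of g \<xi> t] by simp
    also have "\<dots> \<le> 1 / (1 - g*t)" using u_le_one[OF g] l gx by (intro divide_right_mono) auto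
    also have "\<dots> \<le> 1/(g*\<xi>)" using l gx by (intro divide_left_mono) auto
    finally show ?thesis using fan_weight_nonneg[OF g] by (smt (verit))
  next
    case fan
    have gt: "0 < g*t" using g fan by simp
    have "\<bar>u_dt g \<xi> t\<bar> = u_expl g \<xi> t / (g*t)"
      using u_dt_fan[OF fan] gt u_nonneg[of g \<xi> t] by simp
    also have "\<dots> \<le> 1 / (g*t)" using u_le_one[OF g] gt by (intro divide_right_mono) auto
    also have "\<dots> = fan_weight g R \<xi> t" using fan t by (simp add: fan_weight_def)
    finally show ?thesis using gx by (smt (verit) divide_pos_pos)
  next
    case zero
    then show ?thesis using gx fan_weight_nonneg[OF g, of R \<xi> t] by simp
  qed
qed

lemma u_dt_bound_fixed_t:
  assumes g: "g > 0" and x: "0 < \<alpha>" "\<alpha> \<le> \<xi>" and t: "0 < t"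
  shows "\<bar>u_dt g \<xi> t\<bar> \<le> 1/(g*\<alpha>) + 1/(g*t)"
proof -
  have "1/(g*\<xi>) \<le> 1/(g*\<alpha>)" using g x by (intro divide_left_mono mult_left_mono) auto
  moreover have "fan_weight g t \<xi> t \<le> 1/(g*t)" using g t by (simp add: fan_weight_def)
  ultimately show ?thesis using u_dt_bound[OF g, of \<xi> t t] x by linarith
qed

lemma u_dt_bound_fixed_xi:
  assumes g: "g > 0" and x: "0 < \<xi>" "\<xi> \<noteq> 1/g" and t: "0 \<le> t"
  shows "\<bar>u_dt g \<xi> t\<bar> \<le> 1/(g*\<xi>) + 1/\<bar>1 - g*\<xi>\<bar>"
proof -
  have "fan_weight g t \<xi> t \<le> 1/\<bar>1 - g*\<xi>\<bar>"
  proof (cases "0 < t \<and> 1/g - t \<le> \<xi> \<and> \<xi> \<le> 1/g")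
    case True
    then have "0 < 1 - g*\<xi>" "1 - g*\<xi> \<le> g*t" using g x by (auto simp: field_simps)
    then show ?thesis using True by (simp add: fan_weight_def frac_le)
  qed (auto simp: fan_weight_def)
  then show ?thesis using u_dt_bound[OF g x(1), of t t] by linarith
qed

section \<open>The weak formulation on xi > 0\<close>

definition quadrant :: "(real \<times> real) set" where "quadrant = {p. 0 < fst p \<and> 0 \<le> snd p}"

lemma quadrant_sets: "quadrant \<in> sets (borel :: (real \<times> real) measure)"
proof -
  have "{p::real\<times>real \<in> space (borel \<Otimes>\<^sub>M borel). 0 < fst p \<and> 0 \<le> snd p} \<in> sets (borel \<Otimes>\<^sub>M borel)"
    by measurable
  then show ?thesis unfolding borel_prod by (simp add: quadrant_def space_pair_measure)
qed

locale weak_form_box = test_function S \<phi> phx pht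
  for S :: "(real \<times> real) set" and \<phi> phx pht :: "real \<times> real \<Rightarrow> real" +
  fixes g a R Bx Bt Bp :: real
  assumes g: "g > 0" and a: "a > 0" and R_large: "R > 1/g"
    and supp_box: "\<And>p. p \<in> supp \<Longrightarrow> a \<le> fst p \<and> fst p < R \<and> \<bar>snd p\<bar> < R"
    and Bx: "\<And>p. \<bar>phx p\<bar> \<le> Bx" and Bt: "\<And>p. \<bar>pht p\<bar> \<le> Bt" and Bp: "\<And>p. \<bar>\<phi> p\<bar> \<le> Bp"
begin

lemma R_pos: "R > 0" using R_large g by (smt (verit) divide_pos_pos)

lemma vanishes_outside_box:
  assumes "fst p < a \<or> fst p \<ge> R \<or> \<bar>snd p\<bar> \<ge> R"
  shows "\<phi> p = 0" "phx p = 0" "pht p = 0"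
proof -
  have "p \<notin> supp" using supp_box[of p] assms by auto
  then show "\<phi> p = 0" "phx p = 0" "pht p = 0"
    by (auto intro: phi_outside_supp phx_outside_supp pht_outside_supp)
qed

lemma borel_measurable_phi: "\<phi> \<in> borel_measurable borel"
  and borel_measurable_phx: "phx \<in> borel_measurable borel"
  and borel_measurable_pht: "pht \<in> borel_measurable borel"
  using continuous_phi continuous_phx continuous_pht by (auto intro: borel_measurable_continuous_onI)

definition weak_integrand :: "real \<times> real \<Rightarrow> real" where
  "weak_integrand p = indicator quadrant p *
     (u_expl g (fst p) (snd p) * pht p - flux g (u_expl g (fst p) (snd p)) * phx p)"

(* (u phi)_t = u phi_t + v phi, and its extension by zero outside the quadrant. *)
definition dt_u_phi :: "real \<Rightarrow> real \<Rightarrow> real" where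
  "dt_u_phi \<xi> t = u_expl g \<xi> t * pht (\<xi>, t) + u_dt g \<xi> t * \<phi> (\<xi>, t)"

definition dt_integrand :: "real \<times> real \<Rightarrow> real" where
  "dt_integrand p = indicator quadrant p * dt_u_phi (fst p) (snd p)"

(* (flux(u) phi)_xi = flux(u) phi_xi + v phi. *)
definition dxi_flux_phi :: "real \<Rightarrow> real \<Rightarrow> real" where
  "dxi_flux_phi t \<xi> = flux g (u_expl g \<xi> t) * phx (\<xi>, t) + u_dt g \<xi> t * \<phi> (\<xi>, t)"

lemma borel_measurable_weak_integrand: "weak_integrand \<in> borel_measurable borel"
  unfolding weak_integrand_def[abs_def]
  using borel_measurable_u[of g] borel_measurable_flux_u[of g] borel_measurable_pht
    borel_measurable_phx quadrant_sets
  by measurable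

lemma borel_measurable_dt_u_phi: "(\<lambda>p. dt_u_phi (fst p) (snd p)) \<in> borel_measurable borel"
proof -
  have "(\<lambda>p. u_expl g (fst p) (snd p) * pht p + u_dt g (fst p) (snd p) * \<phi> p) \<in> borel_measurable borel"
    using borel_measurable_u[of g] borel_measurable_u_dt[of g] borel_measurable_pht borel_measurable_phi
    by measurable
  then show ?thesis by (simp add: dt_u_phi_def)
qed

lemma borel_measurable_dt_integrand: "dt_integrand \<in> borel_measurable borel"
  unfolding dt_integrand_def[abs_def] using borel_measurable_dt_u_phi quadrant_sets by measurable

lemma borel_measurable_dxi_flux_phi: "dxi_flux_phi t \<in> borel_measurable borel"
proof -
  have "(\<lambda>p. flux g (u_expl g (fst p) (snd p)) * phx p + u_dt g (fst p) (snd p) * \<phi> p) \<in> borel_measurable borel"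
    using borel_measurable_flux_u[of g] borel_measurable_u_dt[of g] borel_measurable_phx borel_measurable_phi
    by measurable
  from borel_measurable_section_fst[OF this, of t] show ?thesis by (simp add: dxi_flux_phi_def[abs_def])
qed

(* For fixed 0 < xi < 1/g, the point (xi, t) lies in the inner region for
   t \<le> 1/g - xi and in the fan afterwards; on each piece u(xi, .) phi(xi, .) is C^1
   with derivative dt_u_phi. *)
lemma dt_u_phi_has_integral_inner:
  assumes x: "0 < \<xi>" "\<xi> < 1/g"
  defines "T \<equiv> 1/g - \<xi>"
  shows "(dt_u_phi \<xi> has_integral
      (u_inner_fn g \<xi> T * \<phi> (\<xi>, T) - u_inner_fn g \<xi> 0 * \<phi> (\<xi>, 0))) {0..T}"
proof (rule fundamental_theorem_of_calculus_interior)
  show "0 \<le> T" using x by (simp add: T_def)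
  have "\<forall>t\<in>{0..T}. 1 - g*t > 0"
  proof
    fix t assume "t \<in> {0..T}"
    then have "g*t \<le> g*T" using g by (intro mult_left_mono) auto
    moreover have "g*T < 1" using x g by (simp add: T_def field_simps)
    ultimately show "1 - g*t > 0" by simp
  qed
  then have "continuous_on {0..T} (\<lambda>t. u_inner_fn g \<xi> t)"
    unfolding u_inner_fn_def by (intro continuous_intros) auto
  then show "continuous_on {0..T} (\<lambda>t. u_inner_fn g \<xi> t * \<phi> (\<xi>, t))"
    by (intro continuous_intros continuous_phi_t)
  fix t assume t: "t \<in> {0<..<T}"
  have tt: "0 < t" "t < 1/g - \<xi>" using t by (auto simp: T_def)
  have "((\<lambda>t. u_inner_fn g \<xi> t * \<phi> (\<xi>, t)) has_real_derivative
      u_dt g \<xi> t * \<phi> (\<xi>, t) + pht (\<xi>, t) * u_inner_fn g \<xi> t) (at t)"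
    by (rule derivative_eq_intros deriv_t_inner_fn_eq_u_dt[OF g x(1) tt] deriv_t refl)+
  moreover have "u_inner_fn g \<xi> t = u_expl g \<xi> t"
    using u_eq_inner_fn[OF g, of \<xi> t] tt x by simp
  ultimately show "((\<lambda>t. u_inner_fn g \<xi> t * \<phi> (\<xi>, t)) has_vector_derivative dt_u_phi \<xi> t) (at t)"
    by (simp add: dt_u_phi_def has_real_derivative_iff_has_vector_derivative[symmetric] algebra_simps)
qed

lemma dt_u_phi_has_integral_fan:
  assumes x: "0 < \<xi>" "\<xi> < 1/g"
  defines "T \<equiv> 1/g - \<xi>"
  shows "(dt_u_phi \<xi> has_integral (- u_fan_fn g \<xi> T * \<phi> (\<xi>, T))) {T..R}"
proof -
  have "(dt_u_phi \<xi> has_integral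
      (u_fan_fn g \<xi> R * \<phi> (\<xi>, R) - u_fan_fn g \<xi> T * \<phi> (\<xi>, T))) {T..R}"
  proof (rule fundamental_theorem_of_calculus_interior)
    show "T \<le> R" using R_large x by (simp add: T_def)
    have "continuous_on {T..R} (\<lambda>t. u_fan_fn g \<xi> t)"
      unfolding u_fan_fn_def using x g by (intro continuous_intros) (auto simp: T_def)
    then show "continuous_on {T..R} (\<lambda>t. u_fan_fn g \<xi> t * \<phi> (\<xi>, t))"
      by (intro continuous_intros continuous_phi_t)
    fix t assume t: "t \<in> {T<..<R}"
    have tt: "t > 1/g - \<xi>" using t by (auto simp: T_def)
    have "((\<lambda>t. u_fan_fn g \<xi> t * \<phi> (\<xi>, t)) has_real_derivative
        u_dt g \<xi> t * \<phi> (\<xi>, t) + pht (\<xi>, t) * u_fan_fn g \<xi> t) (at t)"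
      by (rule derivative_eq_intros deriv_t_fan_fn_eq_u_dt[OF g x tt] deriv_t refl)+
    moreover have "u_fan_fn g \<xi> t = u_expl g \<xi> t"
      using u_eq_fan_fn[OF g, of t \<xi>] tt x by simp
    ultimately show "((\<lambda>t. u_fan_fn g \<xi> t * \<phi> (\<xi>, t)) has_vector_derivative dt_u_phi \<xi> t) (at t)"
      by (simp add: dt_u_phi_def has_real_derivative_iff_has_vector_derivative[symmetric] algebra_simps)
  qed
  moreover have "\<phi> (\<xi>, R) = 0" using vanishes_outside_box(1)[of "(\<xi>, R)"] R_pos by simp
  ultimately show ?thesis by simp
qed

(* Integrating (u phi)_t over [0, R] leaves the value at t = 0; the two pieces match at
   t = 1/g - xi, where u is continuous. *)
lemma dt_u_phi_has_integral:
  assumes x: "0 < \<xi>" "\<xi> \<noteq> 1/g"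
  shows "(dt_u_phi \<xi> has_integral (- u_expl g \<xi> 0 * \<phi> (\<xi>, 0))) {0..R}"
proof (cases "\<xi> > 1/g")
  case True
  then have "dt_u_phi \<xi> = (\<lambda>t. 0)"
    using g by (simp add: fun_eq_iff dt_u_phi_def u_vanishes_beyond u_dt_beyond)
  moreover have "u_expl g \<xi> 0 = 0" using True g by (simp add: u_vanishes_beyond)
  ultimately show ?thesis by simp
next
  case False
  then have x1: "\<xi> < 1/g" using x by simp
  define T where "T = 1/g - \<xi>"
  have T: "0 < T" "T < R" "T < 1/g" using x1 R_large x by (auto simp: T_def)
  have "(dt_u_phi \<xi> has_integral
      (u_inner_fn g \<xi> T * \<phi> (\<xi>, T) - u_inner_fn g \<xi> 0 * \<phi> (\<xi>, 0))
      + (- u_fan_fn g \<xi> T * \<phi> (\<xi>, T))) {0..R}"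
    using dt_u_phi_has_integral_inner[OF x(1) x1] dt_u_phi_has_integral_fan[OF x(1) x1] T
    by (intro has_integral_combine[of 0 T R]) (auto simp: T_def)
  moreover have "u_inner_fn g \<xi> T = u_fan_fn g \<xi> T"
    using u_eq_inner_fn[OF g, of \<xi> T] u_eq_fan_fn[OF g, of T \<xi>] x x1 T by (simp add: T_def)
  moreover have "u_inner_fn g \<xi> 0 = u_expl g \<xi> 0"
    using u_eq_inner_fn[OF g, of \<xi> 0] x x1 g by simp
  ultimately show ?thesis by simp
qed

lemma integral_dt_integrand_t:
  assumes x: "0 < \<xi>" "\<xi> \<noteq> 1/g"
  shows "(\<integral>t. dt_integrand (\<xi>, t) \<partial>lborel) = - u_expl g \<xi> 0 * \<phi> (\<xi>, 0)"
proof -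
  have eq: "dt_integrand (\<xi>, t) = indicator {0..R} t * dt_u_phi \<xi> t" for t
  proof (cases "t \<le> R")
    case False
    then have "R \<le> \<bar>t\<bar>" by simp
    then have "dt_u_phi \<xi> t = 0"
      using vanishes_outside_box[of "(\<xi>, t)"] by (simp add: dt_u_phi_def)
    then show ?thesis by (simp add: dt_integrand_def)
  qed (use x in \<open>auto simp: dt_integrand_def quadrant_def indicator_def\<close>)
  have bound: "\<bar>dt_u_phi \<xi> t\<bar> \<le> Bt + (1/(g*\<xi>) + 1/\<bar>1 - g*\<xi>\<bar>) * Bp" if t: "t \<in> {0..R}" for t
  proof -
    have "\<bar>u_expl g \<xi> t\<bar> * \<bar>pht (\<xi>, t)\<bar> \<le> 1 * Bt"
      using u_nonneg[of g \<xi> t] u_le_one[OF g] Bt[of "(\<xi>, t)"] by (intro mult_mono) auto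
    moreover have "\<bar>u_dt g \<xi> t\<bar> * \<bar>\<phi> (\<xi>, t)\<bar> \<le> (1/(g*\<xi>) + 1/\<bar>1 - g*\<xi>\<bar>) * Bp"
      using u_dt_bound_fixed_xi[OF g x, of t] t Bp[of "(\<xi>, t)"] g x by (intro mult_mono) auto
    ultimately show ?thesis using abs_sum_products_le[of "u_expl g \<xi> t" "pht (\<xi>, t)" "u_dt g \<xi> t" "\<phi> (\<xi>, t)"]
      unfolding dt_u_phi_def by linarith
  qed
  have "(\<integral>t. indicator {0..R} t * dt_u_phi \<xi> t \<partial>lborel) = - u_expl g \<xi> 0 * \<phi> (\<xi>, 0)"
    using borel_measurable_section_snd[OF borel_measurable_dt_u_phi, of \<xi>]
    by (intro lebesgue_integral_Icc_eq_has_integral[OF dt_u_phi_has_integral[OF x] _ bound]) auto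
  then show ?thesis unfolding eq .
qed

(* A point strictly between 0 and the support. *)
definition left_end :: real where "left_end = min (a/2) (R/2)"

lemma left_end: "0 < left_end" "left_end < a" "left_end < R"
  using a R_pos by (auto simp: left_end_def)

(* For fixed t > 0, flux(u(., t)) phi(., t) is continuous and piecewise C^1 and vanishes at
   both ends of [left_end, R]. *)
lemma dxi_flux_phi_has_integral:
  assumes t: "t > 0"
  shows "(dxi_flux_phi t has_integral 0) {left_end..R}"
proof -
  define k where "k \<xi> = flux g (u_expl g \<xi> t) * \<phi> (\<xi>, t)" for \<xi>
  have "(dxi_flux_phi t has_integral (k R - k left_end)) {left_end..R}"
  proof (rule fundamental_theorem_of_calculus_interior_strong[of "{1/g - t, 1/g}"])
    show "finite {1/g - t, 1/g}" by simp
    show "left_end \<le> R" using left_end by simp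
    have "isCont k x" if x: "x \<in> {left_end..R}" for x
    proof -
      have x0: "x > 0" using x left_end by auto
      have "isCont (\<lambda>\<xi>. flux g (u_expl g \<xi> t)) x"
        using isCont_o2[where f="\<lambda>\<xi>. u_expl g \<xi> t" and a=x and g="flux g"] isCont_u[OF g t x0] isCont_flux[OF g]
        by simp
      moreover have "isCont (\<lambda>\<xi>. \<phi> (\<xi>, t)) x"
        using continuous_phi_x[of UNIV t] by (simp add: continuous_on_eq_continuous_at)
      ultimately show ?thesis unfolding k_def by (intro continuous_intros)
    qed
    then show "continuous_on {left_end..R} k" by (simp add: continuous_at_imp_continuous_on)
    fix x assume x: "x \<in> {left_end<..<R} - {1/g - t, 1/g}"
    have x0: "x > 0" using x left_end by auto
    have "(k has_real_derivative u_dt g x t * \<phi> (x, t) + phx (x, t) * flux g (u_expl g x t)) (at x)"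
      unfolding k_def using x x0
      by (intro derivative_eq_intros) (auto intro!: deriv_xi_flux_u[OF g t] deriv_x)
    then show "(k has_vector_derivative dxi_flux_phi t x) (at x)"
      by (simp add: dxi_flux_phi_def has_real_derivative_iff_has_vector_derivative[symmetric] algebra_simps)
  qed
  moreover have "k R = 0" "k left_end = 0"
    using vanishes_outside_box(1)[of "(R, t)"] vanishes_outside_box(1)[of "(left_end, t)"] left_end
    by (auto simp: k_def)
  ultimately show ?thesis by simp
qed

(* For t > 0 the weak integrand differs from (u phi)_t by (flux(u) phi)_xi, whose
   xi-integral vanishes. *)
lemma integral_weak_integrand_xi:
  assumes t: "t > 0"
  shows "(\<integral>\<xi>. weak_integrand (\<xi>, t) \<partial>lborel) = (\<integral>\<xi>. dt_integrand (\<xi>, t) \<partial>lborel)"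
proof -
  let ?Y = "\<lambda>\<xi>. indicator {left_end..R} \<xi> * dxi_flux_phi t \<xi>"
  define C where "C = 1/(g*left_end) + 1/(g*t)"
  have outside: "\<phi> (\<xi>, t) = 0 \<and> phx (\<xi>, t) = 0 \<and> pht (\<xi>, t) = 0" if "\<xi> \<notin> {left_end..R}" for \<xi>
    using that left_end vanishes_outside_box[of "(\<xi>, t)"] by auto
  have v_bound: "\<bar>u_dt g \<xi> t\<bar> * \<bar>\<phi> (\<xi>, t)\<bar> \<le> C * Bp" if "\<xi> \<in> {left_end..R}" for \<xi>
    using u_dt_bound_fixed_t[OF g left_end(1) _ t, of \<xi>] that Bp[of "(\<xi>, t)"]
    by (intro mult_mono) (auto simp: C_def)
  have eq: "weak_integrand (\<xi>, t) = dt_integrand (\<xi>, t) - ?Y \<xi>" for \<xi>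
  proof (cases "\<xi> \<in> {left_end..R}")
    case True
    then have "(\<xi>, t) \<in> quadrant" using left_end t by (auto simp: quadrant_def)
    then show ?thesis using True
      by (simp add: weak_integrand_def dt_integrand_def dt_u_phi_def dxi_flux_phi_def algebra_simps)
  qed (use outside in \<open>simp add: weak_integrand_def dt_integrand_def dt_u_phi_def\<close>)
  have int_dt: "integrable lborel (\<lambda>\<xi>. dt_integrand (\<xi>, t))"
  proof (rule integrable_if_bounded_on_Icc[of _ left_end R "Bt + C * Bp"])
    show "(\<lambda>\<xi>. dt_integrand (\<xi>, t)) \<in> borel_measurable borel"
      using borel_measurable_section_fst[OF borel_measurable_dt_integrand] by simp
    fix \<xi> show "\<xi> \<notin> {left_end..R} \<Longrightarrow> dt_integrand (\<xi>, t) = 0"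
      using outside by (simp add: dt_integrand_def dt_u_phi_def)
    assume x: "\<xi> \<in> {left_end..R}"
    have "\<bar>u_expl g \<xi> t\<bar> * \<bar>pht (\<xi>, t)\<bar> \<le> 1 * Bt"
      using u_nonneg[of g \<xi> t] u_le_one[OF g] Bt[of "(\<xi>, t)"] by (intro mult_mono) auto
    then have "\<bar>dt_u_phi \<xi> t\<bar> \<le> Bt + C * Bp"
      using v_bound[OF x] abs_sum_products_le[of "u_expl g \<xi> t" "pht (\<xi>, t)" "u_dt g \<xi> t" "\<phi> (\<xi>, t)"]
      unfolding dt_u_phi_def by linarith
    then show "\<bar>dt_integrand (\<xi>, t)\<bar> \<le> Bt + C * Bp"
      by (auto simp: dt_integrand_def indicator_def)
  qed
  have Y_bound: "\<bar>dxi_flux_phi t \<xi>\<bar> \<le> Bx + C * Bp" if x: "\<xi> \<in> {left_end..R}" for \<xi>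
  proof -
    have "\<bar>flux g (u_expl g \<xi> t)\<bar> * \<bar>phx (\<xi>, t)\<bar> \<le> 1 * Bx"
      using flux_u_bounds[OF g, of \<xi> t] Bx[of "(\<xi>, t)"] by (intro mult_mono) auto
    then show ?thesis
      using v_bound[OF x] abs_sum_products_le[of "flux g (u_expl g \<xi> t)" "phx (\<xi>, t)" "u_dt g \<xi> t" "\<phi> (\<xi>, t)"]
      unfolding dxi_flux_phi_def by linarith
  qed
  have int_Y: "integrable lborel ?Y"
    by (rule integrable_if_bounded_on_Icc[of _ left_end R "Bx + C * Bp"])
       (use borel_measurable_dxi_flux_phi[of t] Y_bound in \<open>auto simp: indicator_def\<close>)
  have "(\<integral>\<xi>. ?Y \<xi> \<partial>lborel) = 0"
    by (rule lebesgue_integral_Icc_eq_has_integral[OF dxi_flux_phi_has_integral[OF t]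
          borel_measurable_dxi_flux_phi Y_bound])
  then show ?thesis
    unfolding eq Bochner_Integration.integral_diff[OF int_dt int_Y] by simp
qed

definition integration_box :: "(real \<times> real) set" where
  "integration_box = cbox (left_end, 0) (R, R)"

lemma integrable_indicator_box: "integrable lborel (\<lambda>p. indicator integration_box p * C :: real)"
proof -
  have "emeasure lborel integration_box < \<infinity>"
    unfolding integration_box_def by (rule emeasure_lborel_cbox_finite)
  then show ?thesis
    by (intro integrable_mult_left integrable_real_indicator) (simp_all add: integration_box_def)
qed

lemma in_box_if_nonzero:
  assumes "p \<in> quadrant" and "pht p \<noteq> 0 \<or> phx p \<noteq> 0 \<or> \<phi> p \<noteq> 0"
  shows "p \<in> integration_box"
proof -
  have "\<not> (fst p < a \<or> fst p \<ge> R \<or> \<bar>snd p\<bar> \<ge> R)"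
    using assms(2) vanishes_outside_box[of p] by blast
  then show ?thesis using left_end assms(1) by (cases p) (auto simp: integration_box_def cbox_Pair_iff quadrant_def)
qed

lemma integrable_weak_integrand: "integrable lborel weak_integrand"
proof (rule Bochner_Integration.integrable_bound[OF integrable_indicator_box[of "Bt + Bx"]])
  show "weak_integrand \<in> borel_measurable lborel" using borel_measurable_weak_integrand by simp
  show "AE p in lborel. norm (weak_integrand p) \<le> norm (indicator integration_box p * (Bt + Bx))"
  proof (rule AE_I2)
    fix p
    show "norm (weak_integrand p) \<le> norm (indicator integration_box p * (Bt + Bx))"
    proof (cases "p \<in> quadrant \<and> (pht p \<noteq> 0 \<or> phx p \<noteq> 0)")
      case True
      let ?u = "u_expl g (fst p) (snd p)"
      have "\<bar>?u\<bar> * \<bar>pht p\<bar> \<le> 1 * Bt"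
        using u_le_one[OF g] u_nonneg[of g "fst p" "snd p"] Bt[of p] by (intro mult_mono) auto
      moreover have "\<bar>flux g ?u\<bar> * \<bar>phx p\<bar> \<le> 1 * Bx"
        using flux_u_bounds[OF g] Bx[of p] by (intro mult_mono) auto
      moreover have "\<bar>?u * pht p - flux g ?u * phx p\<bar> \<le> \<bar>?u\<bar> * \<bar>pht p\<bar> + \<bar>flux g ?u\<bar> * \<bar>phx p\<bar>"
        by (metis abs_mult abs_triangle_ineq4)
      ultimately have "\<bar>weak_integrand p\<bar> \<le> Bt + Bx" using True by (simp add: weak_integrand_def indicator_def)
      moreover have "p \<in> integration_box" using True in_box_if_nonzero by blast
      ultimately show ?thesis by simp
    qed (auto simp: weak_integrand_def)
  qed
qed

(* The dominating function uses the integrable fan weight for the factor v. *)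
lemma integrable_dt_integrand: "integrable lborel dt_integrand"
proof -
  let ?bound = "\<lambda>p. indicator integration_box p * (Bt + Bp/(g*left_end)) + Bp * fan_weight g R (fst p) (snd p)"
  have int_bound: "integrable lborel ?bound"
  proof (rule Bochner_Integration.integrable_add[OF integrable_indicator_box])
    have "integrable lborel (\<lambda>p::real\<times>real. fan_weight g R (fst p) (snd p))"
      using integrable_fan_weight[OF g R_pos] by (simp add: lborel_prod)
    then show "integrable lborel (\<lambda>p::real\<times>real. Bp * fan_weight g R (fst p) (snd p))"
      by (rule integrable_mult_right)
  qed
  show ?thesis
  proof (rule Bochner_Integration.integrable_bound[OF int_bound])
    show "dt_integrand \<in> borel_measurable lborel" using borel_measurable_dt_integrand by simp
    show "AE p in lborel. norm (dt_integrand p) \<le> norm (?bound p)"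
    proof (rule AE_I2)
      fix p :: "real \<times> real"
      obtain \<xi> t where p: "p = (\<xi>, t)" by (cases p)
      have nonneg: "0 \<le> fan_weight g R \<xi> t" "0 \<le> Bp" "0 \<le> Bt" "0 \<le> 1/(g*left_end)"
        using fan_weight_nonneg[OF g] Bp[of p] Bt[of p] g left_end by auto
      show "norm (dt_integrand p) \<le> norm (?bound p)"
      proof (cases "p \<in> quadrant \<and> (pht p \<noteq> 0 \<or> \<phi> p \<noteq> 0)")
        case True
        then have b: "p \<in> integration_box" using in_box_if_nonzero by blast
        then have x: "left_end \<le> \<xi>" "t \<le> R" by (auto simp: integration_box_def cbox_Pair_iff p)
        have "1/(g*\<xi>) \<le> 1/(g*left_end)"
          using g x left_end by (intro divide_left_mono mult_left_mono) auto
        then have "\<bar>u_dt g \<xi> t\<bar> \<le> 1/(g*left_end) + fan_weight g R \<xi> t"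
          using u_dt_bound[OF g _ x(2), of \<xi>] x left_end by linarith
        then have "\<bar>u_dt g \<xi> t\<bar> * \<bar>\<phi> p\<bar> \<le> (1/(g*left_end) + fan_weight g R \<xi> t) * Bp"
          using Bp[of p] nonneg by (intro mult_mono) auto
        moreover have "\<bar>u_expl g \<xi> t\<bar> * \<bar>pht p\<bar> \<le> 1 * Bt"
          using u_le_one[OF g] u_nonneg[of g \<xi> t] Bt[of p] by (intro mult_mono) auto
        ultimately have "\<bar>dt_u_phi \<xi> t\<bar> \<le> Bt + Bp/(g*left_end) + Bp * fan_weight g R \<xi> t"
          using abs_sum_products_le[of "u_expl g \<xi> t" "pht p" "u_dt g \<xi> t" "\<phi> p"]
          unfolding dt_u_phi_def p by (simp add: algebra_simps)
        then show ?thesis using b nonneg by (simp add: dt_integrand_def indicator_def p)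
      next
        case False
        then have "dt_integrand p = 0" by (auto simp: dt_integrand_def dt_u_phi_def)
        then show ?thesis using nonneg by (simp add: p)
      qed
    qed
  qed
qed

(* The weak identity: integrate the weak integrand first in xi (giving the integral of
   (u phi)_t for a.e. t), exchange the order, and integrate in t. *)
lemma weak_identity:
  "(LINT p : {p. fst p > 0 \<and> snd p \<ge> 0} | lborel.
            u_expl g (fst p) (snd p) * pht p - flux g (u_expl g (fst p) (snd p)) * phx p)
        + (LINT \<xi> : {0<..} | lborel. uI_of g (indicator {0 .. 1 / (1 + g)}) \<xi> * \<phi> (\<xi>, 0)) = 0"
proof -
  let ?uI = "uI_of g (indicator {0 .. 1 / (1 + g)})"
  have weak_int: "integrable (lborel \<Otimes>\<^sub>M lborel) (\<lambda>(x, y). weak_integrand (x, y))"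
    using integrable_weak_integrand by (simp add: lborel_prod)
  have dt_int: "integrable (lborel \<Otimes>\<^sub>M lborel) (\<lambda>(x, y). dt_integrand (x, y))"
    using integrable_dt_integrand by (simp add: lborel_prod)
  have "(LINT p : {p. fst p > 0 \<and> snd p \<ge> 0} | lborel.
            u_expl g (fst p) (snd p) * pht p - flux g (u_expl g (fst p) (snd p)) * phx p)
      = integral\<^sup>L lborel weak_integrand"
    unfolding set_lebesgue_integral_def weak_integrand_def[abs_def] quadrant_def by simp
  also have "\<dots> = (\<integral>t. (\<integral>\<xi>. weak_integrand (\<xi>, t) \<partial>lborel) \<partial>lborel)"
    using lborel_pair.integral_snd[OF weak_int] by (simp add: lborel_prod)
  also have "\<dots> = (\<integral>t. (\<integral>\<xi>. dt_integrand (\<xi>, t) \<partial>lborel) \<partial>lborel)"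
  proof (rule integral_cong_AE)
    show "(\<lambda>t. \<integral>\<xi>. weak_integrand (\<xi>, t) \<partial>lborel) \<in> borel_measurable lborel"
      using lborel_pair.integrable_snd[OF weak_int] by (rule borel_measurable_integrable)
    show "(\<lambda>t. \<integral>\<xi>. dt_integrand (\<xi>, t) \<partial>lborel) \<in> borel_measurable lborel"
      using lborel_pair.integrable_snd[OF dt_int] by (rule borel_measurable_integrable)
    have "(\<integral>\<xi>. weak_integrand (\<xi>, t) \<partial>lborel) = (\<integral>\<xi>. dt_integrand (\<xi>, t) \<partial>lborel)" if "t \<noteq> 0" for t
      using that integral_weak_integrand_xi[of t]
      by (cases "t > 0") (auto simp: weak_integrand_def dt_integrand_def quadrant_def)
    then show "AE t in lborel. (\<integral>\<xi>. weak_integrand (\<xi>, t) \<partial>lborel) = (\<integral>\<xi>. dt_integrand (\<xi>, t) \<partial>lborel)"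
      using AE_lborel_singleton[of 0] by (auto elim: eventually_mono)
  qed
  also have "\<dots> = (\<integral>\<xi>. (\<integral>t. dt_integrand (\<xi>, t) \<partial>lborel) \<partial>lborel)"
    using lborel_pair.Fubini_integral[OF dt_int] by simp
  also have "\<dots> = (\<integral>\<xi>. - (indicator {0<..} \<xi> * (?uI \<xi> * \<phi> (\<xi>, 0))) \<partial>lborel)"
  proof (rule integral_cong_AE)
    show "(\<lambda>\<xi>. \<integral>t. dt_integrand (\<xi>, t) \<partial>lborel) \<in> borel_measurable lborel"
      using lborel_pair.integrable_fst[OF dt_int] by (rule borel_measurable_integrable)
    have "(\<lambda>\<xi>. \<phi> (\<xi>, 0)) \<in> borel_measurable borel"
      using borel_measurable_section_fst[OF borel_measurable_phi] .
    then show "(\<lambda>\<xi>. - (indicator {0<..} \<xi> * (?uI \<xi> * \<phi> (\<xi>, 0)))) \<in> borel_measurable lborel"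
      using borel_measurable_uI[OF g] by measurable
    have "(\<integral>t. dt_integrand (\<xi>, t) \<partial>lborel) = - (indicator {0<..} \<xi> * (?uI \<xi> * \<phi> (\<xi>, 0)))"
      if "\<xi> \<noteq> 1/g" for \<xi>
      using that integral_dt_integrand_t[of \<xi>] u_initial_value[OF g, of \<xi>]
      by (cases "\<xi> > 0") (auto simp: dt_integrand_def quadrant_def)
    then show "AE \<xi> in lborel. (\<integral>t. dt_integrand (\<xi>, t) \<partial>lborel) = - (indicator {0<..} \<xi> * (?uI \<xi> * \<phi> (\<xi>, 0)))"
      using AE_lborel_singleton[of "1/g"] by (auto elim: eventually_mono)
  qed
  also have "\<dots> = - (LINT \<xi> : {0<..} | lborel. ?uI \<xi> * \<phi> (\<xi>, 0))"
    unfolding set_lebesgue_integral_def by (simp add: Bochner_Integration.integral_minus)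
  finally show ?thesis by simp
qed

end

(* Every test function supported in xi > 0 fits into a weak_form_box. *)
lemma weak_sol_pos_u:
  assumes g: "g > 0"
  shows "weak_sol_pos g (uI_of g (indicator {0 .. 1 / (1 + g)})) (u_expl g)"
  unfolding weak_sol_pos_def
proof (intro allI impI)
  fix \<phi> phx pht :: "real \<times> real \<Rightarrow> real"
  assume T: "test_fun {p. fst p > 0} \<phi> phx pht"
  interpret test_function "{p. fst p > 0}" \<phi> phx pht using T by unfold_locales
  obtain a R0 where a: "0 < a" and box: "\<forall>p\<in>supp. a \<le> fst p \<and> fst p \<le> R0 \<and> \<bar>snd p\<bar> \<le> R0"
    using supp_in_box[OF subset_refl] by blast
  obtain Bx Bt Bp where bounds: "\<forall>p. \<bar>phx p\<bar> \<le> Bx" "\<forall>p. \<bar>pht p\<bar> \<le> Bt" "\<forall>p. \<bar>\<phi> p\<bar> \<le> Bp"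
    using bounded_if_vanishes_outside_supp[OF continuous_phx phx_outside_supp]
      bounded_if_vanishes_outside_supp[OF continuous_pht pht_outside_supp]
      bounded_if_vanishes_outside_supp[OF continuous_phi phi_outside_supp] by blast
  define R where "R = \<bar>R0\<bar> + 1/g + 1"
  have g_inv: "0 < 1/g" using g by simp
  interpret weak_form_box "{p. fst p > 0}" \<phi> phx pht g a R Bx Bt Bp
  proof unfold_locales
    show "1/g < R" using g_inv by (simp add: R_def)
    fix p assume "p \<in> supp"
    then have "fst p \<le> R0" "\<bar>snd p\<bar> \<le> R0" "a \<le> fst p" using box by auto
    then show "a \<le> fst p \<and> fst p < R \<and> \<bar>snd p\<bar> < R" using g_inv unfolding R_def by linarith
  qed (use g a bounds in auto)
  show "(LINT p : {p. fst p > 0 \<and> snd p \<ge> 0} | lborel.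
            u_expl g (fst p) (snd p) * pht p - flux g (u_expl g (fst p) (snd p)) * phx p)
        + (LINT \<xi> : {0<..} | lborel. uI_of g (indicator {0 .. 1 / (1 + g)}) \<xi> * \<phi> (\<xi>, 0)) = 0"
    by (rule weak_identity)
qed

section \<open>The density rho\<close>

lemma xi_map_pos:
  assumes g: "g > 0" and x: "x > 0"
  shows "g * xi_map g x = ((1+g)*x) powr (g/(1+g))"
  using g x by (simp add: xi_map_def)

lemma xi_map_neg: "g > 0 \<Longrightarrow> x < 0 \<Longrightarrow> xi_map g x < 0"
  by (simp add: xi_map_def)

lemma x_from_xi_map:
  assumes g: "g > 0" and x: "x > 0"
  shows "x = (g * xi_map g x) powr ((1+g)/g) / (1+g)"
  using g x by (simp add: xi_map_pos powr_powr)

lemma xi_map_threshold: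
  assumes g: "g > 0" and x: "x > 0" and c: "c \<ge> 0"
  shows "x \<le> c powr ((1+g)/g) / (1+g) \<longleftrightarrow> g * xi_map g x \<le> c"
    and "c powr ((1+g)/g) / (1+g) \<le> x \<longleftrightarrow> c \<le> g * xi_map g x"
proof -
  define X where "X = g * xi_map g x"
  have xe: "x = X powr ((1+g)/g) / (1+g)" unfolding X_def by (rule x_from_xi_map[OF g x])
  have e: "((1+g)/g) > 0" "0 \<le> X" using g x by (auto simp: X_def xi_map_pos)
  have d: "\<And>a b. a / (1+g) \<le> b / (1+g) \<longleftrightarrow> a \<le> b" using g by (simp add: divide_le_cancel)
  have "x \<le> c powr ((1+g)/g) / (1+g) \<longleftrightarrow> X \<le> c"
    by (subst xe) (simp only: d powr_le_powr_iff[OF e(1) e(2) c])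
  then show "x \<le> c powr ((1+g)/g) / (1+g) \<longleftrightarrow> g * xi_map g x \<le> c" by (simp only: X_def)
  have "c powr ((1+g)/g) / (1+g) \<le> x \<longleftrightarrow> c \<le> X"
    by (subst xe) (simp only: d powr_le_powr_iff[OF e(1) c e(2)])
  then show "c powr ((1+g)/g) / (1+g) \<le> x \<longleftrightarrow> c \<le> g * xi_map g x" by (simp only: X_def)
qed

lemma deriv_xi_map:
  assumes g: "g > 0" and x: "x > 0"
  shows "deriv (xi_map g) x = ((1+g)*x) powr (-1/(1+g))"
proof -
  have d: "((\<lambda>x. (1/g) * ((1+g)*x) powr (g/(1+g))) has_real_derivative
      (1/g) * ((g/(1+g)) * ((1+g)*x) powr (g/(1+g) - 1) * (1+g))) (at x)"
    using g x by (auto intro!: derivative_eq_intros)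
  have "g/(1+g) - 1 = -1/(1+g)" using g by (simp add: field_simps)
  then have e: "(1/g) * ((g/(1+g)) * ((1+g)*x) powr (g/(1+g) - 1) * (1+g)) = ((1+g)*x) powr (-1/(1+g))"
    using g by simp
  have "(xi_map g has_real_derivative ((1+g)*x) powr (-1/(1+g))) (at x)"
    by (rule has_field_derivative_transform_within_open[OF d[unfolded e], of "{0<..}"])
       (use x in \<open>auto simp: xi_map_def\<close>)
  then show ?thesis by (rule DERIV_imp_deriv)
qed

(* The fan part of rho, i.e. xi'(x) times the fan formula for u. *)
definition rho_fan :: "real \<Rightarrow> real \<Rightarrow> real \<Rightarrow> real" where
  "rho_fan g t x = ((((1 + g) * x) powr (- g / (1 + g)) - 1) / (g * t)) powr (1/g)"

lemma rho_expl_via_xi: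
  assumes g: "g > 0" and x: "x > 0"
  defines "\<xi> \<equiv> xi_map g x"
  shows "rho_expl g x t = (if 0 \<le> \<xi> \<and> \<xi> \<le> 1/g - t \<and> 0 \<le> t \<and> t < 1/g then (1 - g*t) powr (- 1/g)
      else if max 0 (1/g - t) \<le> \<xi> \<and> \<xi> \<le> 1/g then rho_fan g t x else 0)"
proof -
  have xi0: "\<xi> > 0" using g x by (simp add: \<xi>_def xi_map_def)
  have inner: "(0 < x \<and> x \<le> (1 - g * t) powr ((1 + g) / g) / (1 + g) \<and> 0 \<le> t \<and> t < 1/g)
      \<longleftrightarrow> (0 \<le> \<xi> \<and> \<xi> \<le> 1/g - t \<and> 0 \<le> t \<and> t < 1/g)"
  proof (cases "t < 1/g")
    case True
    then have c: "1 - g*t \<ge> 0" using g by (simp add: field_simps)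
    have "\<xi> \<le> 1/g - t \<longleftrightarrow> g*\<xi> \<le> 1 - g*t" using g by (simp add: field_simps)
    then show ?thesis using xi_map_threshold(1)[OF g x c] x xi0 by (auto simp: \<xi>_def)
  qed auto
  have upper: "\<xi> \<le> 1/g \<longleftrightarrow> x \<le> 1/(1+g)"
  proof -
    have "\<xi> \<le> 1/g \<longleftrightarrow> g*\<xi> \<le> 1" using g by (simp add: field_simps)
    then show ?thesis using xi_map_threshold(1)[OF g x, of 1] by (simp add: \<xi>_def)
  qed
  have lower: "max 0 (1/g - t) \<le> \<xi> \<longleftrightarrow> max 0 ((max (1 - g*t) 0) powr ((1 + g) / g) / (1 + g)) \<le> x"
  proof -
    have "max 0 (1/g - t) \<le> \<xi> \<longleftrightarrow> max (1 - g*t) 0 \<le> g*\<xi>"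
      using g xi0 by (auto simp: field_simps)
    then show ?thesis using xi_map_threshold(2)[OF g x, of "max (1 - g*t) 0"] x by (auto simp: \<xi>_def)
  qed
  show ?thesis unfolding rho_expl_def inner upper[symmetric] lower[symmetric] rho_fan_def by simp
qed

lemma density_via_xi:
  assumes g: "g > 0" and x: "x > 0"
  defines "\<xi> \<equiv> xi_map g x"
  shows "deriv (xi_map g) x * u_expl g \<xi> t = (if 0 \<le> \<xi> \<and> \<xi> \<le> 1/g - t \<and> 0 \<le> t \<and> t < 1/g then (1 - g*t) powr (- 1/g)
      else if max 0 (1/g - t) \<le> \<xi> \<and> \<xi> \<le> 1/g then rho_fan g t x else 0)"
proof -
  define y where "y = (1+g)*x"
  define q where "q = g/(1+g)"
  have y: "y > 0" using g x by (simp add: y_def)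
  have g_xi: "g*\<xi> = y powr q" using g x by (simp add: \<xi>_def xi_map_pos y_def q_def)
  have xi0: "\<xi> > 0" using g x by (simp add: \<xi>_def xi_map_def)
  have D: "deriv (xi_map g) x = (y powr (-q)) powr (1/g)"
  proof -
    have "-q * (1/g) = -1/(1+g)" using g by (simp add: q_def)
    then show ?thesis using g x y by (simp add: deriv_xi_map y_def[symmetric] powr_powr)
  qed
  consider (inner) "0 \<le> \<xi> \<and> \<xi> \<le> 1/g - t \<and> 0 \<le> t \<and> t < 1/g"
    | (fan) "\<not>(0 \<le> \<xi> \<and> \<xi> \<le> 1/g - t \<and> 0 \<le> t \<and> t < 1/g)" "max 0 (1/g - t) \<le> \<xi> \<and> \<xi> \<le> 1/g"
    | (zero) "\<not>(0 \<le> \<xi> \<and> \<xi> \<le> 1/g - t \<and> 0 \<le> t \<and> t < 1/g)" "\<not>(max 0 (1/g - t) \<le> \<xi> \<and> \<xi> \<le> 1/g)"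
    by blast
  then show ?thesis
  proof cases
    case inner
    then have c: "1 - g*t > 0" using g by (simp add: field_simps)
    have "(y powr (-q)) powr (1/g) * (y powr q) powr (1/g) = 1"
      using y by (simp add: powr_powr powr_add[symmetric])
    then have "(y powr (-q)) powr (1/g) * u_expl g \<xi> t = 1 / (1-g*t) powr (1/g)"
      using u_inner[OF g] inner g_xi by (metis times_divide_eq_right)
    also have "\<dots> = (1-g*t) powr (- 1/g)" using c by (simp add: powr_minus_divide)
    finally show ?thesis unfolding if_P[OF inner] D .
  next
    case fan
    have t: "t > 0"
    proof (rule ccontr)
      assume "\<not> t > 0"
      then have "t = 0" using fan g by (smt (verit) divide_pos_pos)
      then show False using fan xi0 g by auto
    qed
    have u: "u_expl g \<xi> t = (1 - y powr q) powr (1/g) / (g*t) powr (1/g)"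
      using u_fan[OF g t] fan g_xi xi0 by simp
    have nn: "0 \<le> 1 - y powr q" using fan g_xi g by (simp add: field_simps)
    have "(y powr (-q)) powr (1/g) * u_expl g \<xi> t = ((y powr (-q)) * ((1 - y powr q) / (g*t))) powr (1/g)"
      unfolding u using nn t g by (simp add: powr_mult powr_divide)
    also have "(y powr (-q)) * ((1 - y powr q) / (g*t)) = (y powr (-q) - 1) / (g*t)"
      using y by (simp add: field_simps powr_minus)
    finally show ?thesis unfolding if_not_P[OF fan(1)] if_P[OF fan(2)] D
      by (simp add: rho_fan_def y_def q_def)
  next
    case zero
    then have "u_expl g \<xi> t = 0" unfolding u_expl_def by auto
    then show ?thesis unfolding if_not_P[OF zero(1)] if_not_P[OF zero(2)] by simp
  qed
qed

definition density :: "real \<Rightarrow> real \<Rightarrow> real \<Rightarrow> real" where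
  "density g x t = deriv (xi_map g) x * u_expl g (xi_map g x) t"

lemma density_pos: "g > 0 \<Longrightarrow> x > 0 \<Longrightarrow> density g x t = rho_expl g x t"
  unfolding density_def by (simp add: rho_expl_via_xi density_via_xi)

lemma density_neg: "g > 0 \<Longrightarrow> x < 0 \<Longrightarrow> density g x t = 0"
  by (simp add: density_def xi_map_neg u_vanishes_neg)

definition rho_fan_primitive :: "real \<Rightarrow> real \<Rightarrow> real \<Rightarrow> real" where
  "rho_fan_primitive g t x = - ((g*t) powr (-1/g)) * (1 - ((1+g)*x) powr (g/(1+g))) powr ((1+g)/g) / (1+g)"

lemma rho_fan_as_product:
  fixes y T q g :: real
  assumes y: "0 < y" "y < 1" and T: "T > 0" and g: "g > 0" and q: "q = g/(1+g)"
  shows "T powr (-1/g) * (1 - y powr q) powr (1/g) * y powr (q - 1) = ((y powr (-q) - 1)/T) powr (1/g)"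
proof -
  have yq: "y powr q \<le> 1" using y g q by (intro powr_le1) auto
  have "(y powr (-q) - 1)/T = y powr (-q) * (1 - y powr q) / T" using y by (simp add: powr_minus field_simps)
  then have "((y powr (-q) - 1)/T) powr (1/g) = (y powr (-q)) powr (1/g) * (1 - y powr q) powr (1/g) / T powr (1/g)"
    using yq T y by (simp add: powr_mult powr_divide)
  also have "(y powr (-q)) powr (1/g) = y powr (q - 1)"
  proof -
    have "-q * (1/g) = q - 1" using g q by (simp add: field_simps)
    then show ?thesis by (simp add: powr_powr)
  qed
  finally show ?thesis using T by (simp add: powr_minus_divide field_simps)
qed

lemma rho_fan_primitive_deriv:
  assumes g: "g > 0" and t: "t > 0" and x: "0 < x" "x < 1/(1+g)"
  shows "(rho_fan_primitive g t has_real_derivative rho_fan g t x) (at x)"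
proof -
  define q where "q = g/(1+g)"
  define y where "y = (1+g)*x"
  have y: "0 < y" "y < 1" using x g by (auto simp: y_def field_simps intro: add_pos_pos)
  have yq: "y powr q < 1" using y g by (simp add: q_def powr01_less_one)
  have d: "(rho_fan_primitive g t has_real_derivative
      - ((g*t) powr (-1/g)) * (((1+g)/g) * (1 - y powr q) powr ((1+g)/g - 1) * (- (q * y powr (q - 1) * (1+g)))) / (1+g)) (at x)"
    unfolding rho_fan_primitive_def q_def[symmetric] using yq y g
    by (auto intro!: derivative_eq_intros simp: y_def)
  have e1: "(1+g)/g - 1 = 1/g" using g by (simp add: field_simps)
  have k: "((1+g)/g) * q = 1" using g by (simp add: q_def)
  have rearrange: "\<And>A B C c. - A * (c * B * (- (q * C * (1+g)))) / (1+g) = A*B*C*(c*q)"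
    using g by (simp add: field_simps)
  have "- ((g*t) powr (-1/g)) * (((1+g)/g) * (1 - y powr q) powr ((1+g)/g - 1) * (- (q * y powr (q - 1) * (1+g)))) / (1+g)
      = (g*t) powr (-1/g) * (1 - y powr q) powr (1/g) * y powr (q - 1)"
    unfolding e1 rearrange k by simp
  also have "\<dots> = rho_fan g t x" unfolding rho_fan_def
    using rho_fan_as_product[OF y _ g q_def] g t by (simp add: y_def q_def)
  finally show ?thesis using d by simp
qed

lemma rho_fan_primitive_continuous:
  assumes g: "g > 0"
  shows "continuous_on {0..1/(1+g)} (rho_fan_primitive g t)"
proof -
  have base: "0 \<le> 1 - ((1+g)*x) powr (g/(1+g))" if "x \<in> {0..1/(1+g)}" for x
  proof -
    have "\<bar>(1+g)*x\<bar> \<le> 1" using that g by (auto simp: field_simps)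
    then have "((1+g)*x) powr (g/(1+g)) \<le> 1" using g by (intro powr_le1) auto
    then show ?thesis by simp
  qed
  have "continuous_on {0..1/(1+g)} (\<lambda>x. 1 - ((1+g)*x) powr (g/(1+g)))"
    using g by (intro continuous_intros continuous_on_powr') auto
  then have "continuous_on {0..1/(1+g)} (\<lambda>x. (1 - ((1+g)*x) powr (g/(1+g))) powr ((1+g)/g))"
    by (rule continuous_on_powr') (use g base in auto)
  then have "continuous_on {0..1/(1+g)}
      (\<lambda>x. (- ((g*t) powr (-1/g)) / (1+g)) * (1 - ((1+g)*x) powr (g/(1+g))) powr ((1+g)/g))"
    by (rule continuous_on_mult_left)
  then show ?thesis by (simp add: rho_fan_primitive_def[abs_def])
qed

lemma rho_fan_has_integral:
  assumes g: "g > 0" and t: "t > 0" and ab: "0 \<le> a" "a \<le> 1/(1+g)"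
  shows "(rho_fan g t has_integral (- rho_fan_primitive g t a)) {a..1/(1+g)}"
proof -
  have "(rho_fan g t has_integral (rho_fan_primitive g t (1/(1+g)) - rho_fan_primitive g t a)) {a..1/(1+g)}"
  proof (rule fundamental_theorem_of_calculus_interior[OF ab(2)])
    show "continuous_on {a..1/(1+g)} (rho_fan_primitive g t)"
      by (rule continuous_on_subset[OF rho_fan_primitive_continuous[OF g]]) (use ab in auto)
    fix x assume "x \<in> {a<..<1/(1+g)}"
    then show "(rho_fan_primitive g t has_vector_derivative rho_fan g t x) (at x)"
      using rho_fan_primitive_deriv[OF g t, of x] ab
      by (auto simp: has_real_derivative_iff_has_vector_derivative)
  qed
  moreover have "rho_fan_primitive g t (1/(1+g)) = 0" using g by (simp add: rho_fan_primitive_def)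
  ultimately show ?thesis by simp
qed

(* After the fan has reached x = 0 (t \<ge> 1/g), rho is the fan part on (0, 1/(1+g)], and
   mass has been lost through x = 0. *)
lemma rho_expl_integral_late:
  assumes g: "g > 0" and t: "t \<ge> 1/g"
  shows "((\<lambda>x. rho_expl g x t) has_integral (1 / (1 + g)) * (g * t) powr (- 1/g)) {0<..}"
proof -
  have t0: "t > 0" using g t by (smt (verit) divide_pos_pos)
  have c: "1 - g*t \<le> 0" using g t by (simp add: field_simps)
  have "(rho_fan g t has_integral (1 / (1 + g)) * (g * t) powr (- 1/g)) {0..1/(1+g)}"
    using rho_fan_has_integral[OF g t0, of 0] g by (simp add: rho_fan_primitive_def)
  then have "((\<lambda>x. rho_expl g x t) has_integral (1 / (1 + g)) * (g * t) powr (- 1/g)) {0..1/(1+g)}"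
    by (rule has_integral_spike_finite[of "{0}", rotated 2])
       (use c t g in \<open>auto simp: rho_expl_def rho_fan_def max_def\<close>)
  then show ?thesis
    by (rule has_integral_Ioi_if_vanishes_beyond) (use g t in \<open>auto simp: rho_expl_def\<close>)
qed

lemma rho_fan_mass_early:
  assumes g: "g > 0" and t: "0 < t" "t < 1/g"
  defines "x1 \<equiv> (1 - g*t) powr ((1+g)/g) / (1+g)"
  shows "(rho_fan g t has_integral g*t/(1+g)) {x1..1/(1+g)}"
proof -
  have c: "1 - g*t > 0" using g t by (simp add: field_simps)
  have "(1 - g*t) powr ((1+g)/g) \<le> 1" using c g t by (intro powr_le1) auto
  then have x1: "0 \<le> x1" "x1 \<le> 1/(1+g)" using g by (simp_all add: x1_def divide_right_mono)
  have "((1+g) * x1) powr (g/(1+g)) = 1 - g*t"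
    using g c by (simp add: x1_def powr_powr)
  moreover have "(g*t) powr (-1/g) * (g*t) powr ((1+g)/g) = g*t"
  proof -
    have "-1/g + (1+g)/g = 1" using g by (simp add: field_simps)
    then show ?thesis using g t by (simp add: powr_add[symmetric])
  qed
  ultimately have "- rho_fan_primitive g t x1 = g*t/(1+g)"
    by (simp add: rho_fan_primitive_def)
  then show ?thesis using rho_fan_has_integral[OF g t(1) x1] by simp
qed

(* Before that time, rho is constant (1 - g t)^(-1/g) on (0, x1] and the fan part on
   (x1, 1/(1+g)], with x1 = (1 - g t)^((1+g)/g)/(1+g); the two masses add up to 1/(1+g). *)
lemma rho_expl_integral_early:
  assumes g: "g > 0" and t: "0 \<le> t" "t < 1/g"
  shows "((\<lambda>x. rho_expl g x t) has_integral 1 / (1 + g)) {0<..}"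
proof -
  have c: "1 - g*t > 0" using g t by (simp add: field_simps)
  define x1 where "x1 = (1 - g*t) powr ((1+g)/g) / (1+g)"
  define c0 where "c0 = (1 - g*t) powr (- 1/g)"
  have x1_pos: "x1 > 0" using c g by (simp add: x1_def)
  have x1_le: "x1 \<le> 1/(1+g)"
  proof -
    have "(1 - g*t) powr ((1+g)/g) \<le> 1" using c g t by (intro powr_le1) (auto simp: mult_nonneg_nonneg)
    then show ?thesis using g by (simp add: x1_def divide_right_mono)
  qed
  have mass_const: "c0 * x1 = (1 - g*t) / (1+g)"
  proof -
    have "- 1/g + (1+g)/g = 1" using g by (simp add: field_simps)
    then have "c0 * (1 - g*t) powr ((1+g)/g) = 1 - g*t" using c by (simp add: c0_def powr_add[symmetric])
    then show ?thesis by (simp add: x1_def)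
  qed
  have "((\<lambda>x. c0) has_integral c0 * x1) {0..x1}"
    using has_integral_const_real[of c0 0 x1] x1_pos by (simp add: mult.commute)
  then have const_part: "((\<lambda>x. rho_expl g x t) has_integral c0 * x1) {0..x1}"
    by (rule has_integral_spike_finite[of "{0}", rotated 2])
       (use t in \<open>auto simp: rho_expl_def c0_def x1_def\<close>)
  have fan_part: "((\<lambda>x. rho_expl g x t) has_integral g*t/(1+g)) {x1..1/(1+g)}"
  proof (cases "t = 0")
    case True
    then have "x1 = 1/(1+g)" using g by (simp add: x1_def)
    then show ?thesis using True has_integral_refl(2)[of _ "1/(1+g)"] by simp
  next
    case False
    then have fan_int: "(rho_fan g t has_integral g*t/(1+g)) {x1..1/(1+g)}"
      using rho_fan_mass_early[OF g _ t(2)] t by (simp add: x1_def)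
    have "max 0 ((max (1 - g * t) 0) powr ((1 + g) / g) / (1 + g)) = x1"
      using c x1_pos by (simp add: x1_def)
    then have fan_eq: "rho_expl g x t = rho_fan g t x" if "x \<in> {x1..1/(1+g)} - {x1}" for x
      using that by (auto simp: rho_expl_def rho_fan_def x1_def)
    show ?thesis by (rule has_integral_spike_finite[of "{x1}", OF _ _ fan_int]) (use fan_eq in auto)
  qed
  have "((\<lambda>x. rho_expl g x t) has_integral c0 * x1 + g*t/(1+g)) {0..1/(1+g)}"
    by (rule has_integral_combine[OF _ x1_le const_part fan_part]) (use x1_pos in simp)
  moreover have "c0 * x1 + g*t/(1+g) = 1/(1+g)"
    using g unfolding mass_const by (simp add: field_simps)
  ultimately have "((\<lambda>x. rho_expl g x t) has_integral 1/(1+g)) {0..1/(1+g)}" by simp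
  then show ?thesis
    by (rule has_integral_Ioi_if_vanishes_beyond) (use x1_le in \<open>auto simp: rho_expl_def x1_def[symmetric]\<close>)
qed

lemma density_integral:
  assumes g: "g > 0"
  shows "0 \<le> t \<Longrightarrow> t \<le> 1/g \<Longrightarrow> ((\<lambda>x. density g x t) has_integral 1 / (1 + g)) {0<..}"
    and "t \<ge> 1/g \<Longrightarrow> ((\<lambda>x. density g x t) has_integral (1 / (1 + g)) * (g * t) powr (- 1/g)) {0<..}"
proof -
  have cong: "((\<lambda>x. density g x t) has_integral I) {0<..} \<longleftrightarrow> ((\<lambda>x. rho_expl g x t) has_integral I) {0<..}"
    for I by (rule has_integral_cong) (simp add: density_pos[OF g])
  show "((\<lambda>x. density g x t) has_integral 1 / (1 + g)) {0<..}" if "0 \<le> t" "t \<le> 1/g"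
    using that rho_expl_integral_early[OF g, of t] rho_expl_integral_late[OF g, of t] g
    unfolding cong by (cases "t < 1/g") auto
  show "((\<lambda>x. density g x t) has_integral (1 / (1 + g)) * (g * t) powr (- 1/g)) {0<..}" if "t \<ge> 1/g"
    using rho_expl_integral_late[OF g that] unfolding cong .
qed

theorem mainTheorem4:
  fixes \<gamma> :: real
  assumes "\<gamma> > 0"
  defines "fI \<equiv> indicator {0 .. 1 / (1 + \<gamma>)} :: real \<Rightarrow> real"
  defines "\<rho> \<equiv> (\<lambda>x t. deriv (xi_map \<gamma>) x * u_expl \<gamma> (xi_map \<gamma> x) t)"
  shows "(\<forall>\<xi>. uI_of \<gamma> fI \<xi> = (\<gamma> * \<xi>) powr (1/\<gamma>) * indicator {0 .. 1/\<gamma>} \<xi>)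
    \<and> entropy_solution \<gamma> (uI_of \<gamma> fI) (u_expl \<gamma>)
    \<and> (\<forall>\<xi> t. \<xi> < 0 \<longrightarrow> u_expl \<gamma> \<xi> t = 0)
    \<and> (\<forall>x t. x > 0 \<and> t \<ge> 0 \<longrightarrow> \<rho> x t = rho_expl \<gamma> x t)
    \<and> (\<forall>x t. x < 0 \<and> t \<ge> 0 \<longrightarrow> \<rho> x t = 0)
    \<and> (\<forall>t. 0 \<le> t \<and> t \<le> 1/\<gamma> \<longrightarrow> ((\<lambda>x. \<rho> x t) has_integral 1 / (1 + \<gamma>)) {0<..})
    \<and> (\<forall>t. t \<ge> 1/\<gamma> \<longrightarrow>
          ((\<lambda>x. \<rho> x t) has_integral (1 / (1 + \<gamma>)) * (\<gamma> * t) powr (- 1/\<gamma>)) {0<..})"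
proof -
  have g: "\<gamma> > 0" by fact
  have \<rho>_eq: "\<rho> = density \<gamma>" by (simp add: \<rho>_def density_def fun_eq_iff)
  have "entropy_solution \<gamma> (uI_of \<gamma> fI) (u_expl \<gamma>)"
    unfolding entropy_solution_def fI_def
    using Linf_L1_BV_u[OF g] weak_sol_pos_u[OF g] weak_sol_neg_u[OF g] entropy_inequalities_u[OF g]
    by blast
  then show ?thesis
    unfolding \<rho>_eq fI_def
    using uI_formula[OF g] u_vanishes_neg density_pos[OF g] density_neg[OF g] density_integral[OF g]
    by auto
qed

end
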